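(* Under the standing assumption below, for every $\sigma\in\mathcal X_{J-h}\setminus\{\underline{-1},\underline{+1}\}$ one has $V_\sigma\le V^*:=2J$.
   Context: Let $\mathbb{T}^2$ denote the triangular lattice embedded in $\mathbb{R}^2$ and $\mathbb{H}^2$ its dual, the hexagonal lattice; each vertex $i$ of $\mathbb{H}^2$ is the centre of a unique closed triangular face of $\mathbb{T}^2$ (the face centred at $i$), and $d$ denotes the graph distance on $\mathbb{H}^2$, so $d(i,j)=1$ iff the faces centred at $i$ and $j$ share an edge. Fix an integer $L\ge1$ and let $\Lambda\subset\mathbb{H}^2$ be the set of sites in a parallelogram of side length $L$ cut along two coordinate axes of $\mathbb{T}^2$, with periodic boundary conditions; thus $\Lambda$ is a discrete torus with $|\Lambda|=2L^2$ sites, each having 3 nearest neighbours. Let $\mathcal X=\{-1,+1\}^\Lambda$ and let $\underline{+1}$, $\underline{-1}$ be the configurations with all spins $+1$, resp. $-1$. For $J,h>0$ the Hamiltonian is $H(\sigma)=-\frac J2\sum_{\{i,j\}\subset\Lambda:\,d(i,j)=1}\sigma(i)\sigma(j)-\frac h2\sum_{i\in\Lambda}\sigma(i)$ (sum over unordered nearest-neighbour pairs), so that $H(\sigma)-H(\underline{-1})=J|\gamma(\sigma)|-hN^+(\sigma)$, where $|\gamma(\sigma)|$ is the number of nearest-neighbour pairs carrying opposite spins and $N^+(\sigma)$ is the number of sites with spin $+1$. For $x\in\Lambda$, $\sigma^{(x)}$ denotes $\sigma$ with the spin at $x$ reversed. Standing assumption: $0<h<1$, $J\ge2h$, $\frac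 J{2h}-\frac12\notin\mathbb Z$, and $|\Lambda|\ge(4J/h)^2$. Metastability notions: a path is a finite sequence $(\omega_1,\dots,\omega_n)$ in $\mathcal X$ with each $\omega_{k+1}=\omega_k^{(x)}$ for some $x\in\Lambda$; $\Theta(\sigma,\eta)$ is the set of paths from $\sigma$ to $\eta$; $\Phi(\sigma,\eta)=\min_{\omega\in\Theta(\sigma,\eta)}\max_{\zeta\in\omega}H(\zeta)$ and $\Phi(A,B)=\min_{\sigma\in A,\eta\in B}\Phi(\sigma,\eta)$. $\mathcal I_\sigma=\{\eta: H(\eta)<H(\sigma)\}$; the stability level is $V_\sigma=\Phi(\sigma,\mathcal I_\sigma)-H(\sigma)$ ($V_\sigma=\infty$ if $\mathcal I_\sigma=\emptyset$); $\mathcal X_V=\{\sigma\in\mathcal X: V_\sigma>V\}$. *)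

theory Defs
  imports Complex_Main "HOL-Library.Extended_Real"
begin

text \<open>Sites of the hexagonal lattice on the discrete torus: a site is a triangular face
  of the triangular lattice in the L x L parallelogram, encoded as (a, b, up), with
  a, b < L lattice coordinates of the parallelogram cell and up = True for the upward
  triangle with corners (a,b),(a+1,b),(a,b+1) and up = False for the downward triangle
  with corners (a+1,b),(a,b+1),(a+1,b+1); coordinates are taken mod L.\<close>

type_synonym site = "nat \<times> nat \<times> bool"

definition Lam :: "nat \<Rightarrow> site set" where
  "Lam L = {0..<L} \<times> {0..<L} \<times> UNIV"

text \<open>Faces sharing an edge with the upward triangle at (a,b).\<close>
definition up_nbrs :: "nat \<Rightarrow> nat \<Rightarrow> nat \<Rightarrow> site set" where
  "up_nbrs L a b = {(a, b, False), (a, (b + L - 1) mod L, False), ((a + L - 1) mod L, b, False)}"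

definition adj :: "nat \<Rightarrow> site \<Rightarrow> site \<Rightarrow> bool" where
  "adj L i j \<longleftrightarrow> i \<in> Lam L \<and> j \<in> Lam L \<and>
     ((snd (snd i) \<and> j \<in> up_nbrs L (fst i) (fst (snd i))) \<or>
      (snd (snd j) \<and> i \<in> up_nbrs L (fst j) (fst (snd j))))"

definition edges :: "nat \<Rightarrow> site set set" where
  "edges L = {{i, j} | i j. adj L i j}"

definition conf :: "nat \<Rightarrow> (site \<Rightarrow> int) set" where
  "conf L = {\<sigma>. (\<forall>x. (x \<in> Lam L \<longrightarrow> \<sigma> x \<in> {-1, 1}) \<and> (x \<notin> Lam L \<longrightarrow> \<sigma> x = 0))}"

definition allplus :: "nat \<Rightarrow> site \<Rightarrow> int" where
  "allplus L = (\<lambda>x. if x \<in> Lam L then 1 else 0)"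

definition allminus :: "nat \<Rightarrow> site \<Rightarrow> int" where
  "allminus L = (\<lambda>x. if x \<in> Lam L then -1 else 0)"

definition Ham :: "nat \<Rightarrow> real \<Rightarrow> real \<Rightarrow> (site \<Rightarrow> int) \<Rightarrow> real" where
  "Ham L J h \<sigma> = - (J / 2) * (\<Sum>e\<in>edges L. (\<Prod>i\<in>e. real_of_int (\<sigma> i)))
                  - (h / 2) * (\<Sum>i\<in>Lam L. real_of_int (\<sigma> i))"

definition flip :: "(site \<Rightarrow> int) \<Rightarrow> site \<Rightarrow> site \<Rightarrow> int" where
  "flip \<sigma> x = \<sigma>(x := - \<sigma> x)"

definition is_path :: "nat \<Rightarrow> (site \<Rightarrow> int) list \<Rightarrow> bool" where
  "is_path L \<omega> \<longleftrightarrow> \<omega> \<noteq> [] \<and> set \<omega> \<subseteq> conf L \<and>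
     (\<forall>k. Suc k < length \<omega> \<longrightarrow> (\<exists>x\<in>Lam L. \<omega> ! Suc k = flip (\<omega> ! k) x))"

definition paths :: "nat \<Rightarrow> (site \<Rightarrow> int) \<Rightarrow> (site \<Rightarrow> int) \<Rightarrow> (site \<Rightarrow> int) list set" where
  "paths L \<sigma> \<eta> = {\<omega>. is_path L \<omega> \<and> hd \<omega> = \<sigma> \<and> last \<omega> = \<eta>}"

definition Phi :: "nat \<Rightarrow> real \<Rightarrow> real \<Rightarrow> (site \<Rightarrow> int) \<Rightarrow> (site \<Rightarrow> int) \<Rightarrow> real" where
  "Phi L J h \<sigma> \<eta> = Min ((\<lambda>\<omega>. Max (Ham L J h ` set \<omega>)) ` paths L \<sigma> \<eta>)"

definition PhiSet :: "nat \<Rightarrow> real \<Rightarrow> real \<Rightarrow> (site \<Rightarrow> int) set \<Rightarrow> (site \<Rightarrow> int) set \<Rightarrow> real" where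
  "PhiSet L J h A B = Min {Phi L J h \<sigma> \<eta> | \<sigma> \<eta>. \<sigma> \<in> A \<and> \<eta> \<in> B}"

definition Iset :: "nat \<Rightarrow> real \<Rightarrow> real \<Rightarrow> (site \<Rightarrow> int) \<Rightarrow> (site \<Rightarrow> int) set" where
  "Iset L J h \<sigma> = {\<eta> \<in> conf L. Ham L J h \<eta> < Ham L J h \<sigma>}"

definition stab :: "nat \<Rightarrow> real \<Rightarrow> real \<Rightarrow> (site \<Rightarrow> int) \<Rightarrow> ereal" where
  "stab L J h \<sigma> = (if Iset L J h \<sigma> = {} then \<infinity>
      else ereal (PhiSet L J h {\<sigma>} (Iset L J h \<sigma>) - Ham L J h \<sigma>))"

definition XV :: "nat \<Rightarrow> real \<Rightarrow> real \<Rightarrow> real \<Rightarrow> (site \<Rightarrow> int) set" where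
  "XV L J h V = {\<sigma> \<in> conf L. stab L J h \<sigma> > ereal V}"

end

theory Submission
  imports Defs "HOL-Library.Multiset"
begin

(* The torus is unfolded to the plane: configurations become periodic fields on the faces of the
   triangular lattice, and it suffices to find a sequence of single flips whose running energy
   never exceeds H(sigma) + 2J and which ends below H(sigma).

   If some spin disagrees with the majority of its neighbours, or two neighbouring minus spins
   both have a plus neighbour, one or two flips do.  Otherwise walk along the boundary of the plus
   region, starting from an edge between a plus and a minus face.  Let l be the critical length,
   (2l - 1)h < J < (2l + 1)h.  Along a side longer than l, a row of l + 1 minus spins can be turned
   to plus; a side shorter than l that ends in a corner can be eroded; both stay within 2J of the
   start and end below it.  What remains is three consecutive sides of length exactly l: for
   J < 2lh grow rows along two of them; otherwise erode all three. *)

section \<open>The lattice and the torus\<close>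

text \<open>Faces of the planar triangular lattice, in the coordinates of \<open>Lam\<close> but not reduced
  mod \<open>L\<close>; \<open>proj L\<close> maps them onto the torus.\<close>

type_synonym face = "int \<times> int \<times> bool"

fun nbrs :: "face \<Rightarrow> face list" where
  "nbrs (u, v, True) = [(u, v, False), (u, v - 1, False), (u - 1, v, False)]"
| "nbrs (u, v, False) = [(u, v, True), (u, v + 1, True), (u + 1, v, True)]"

definition proj :: "nat \<Rightarrow> face \<Rightarrow> site" where
  "proj L x = (nat (fst x mod int L), nat (fst (snd x) mod int L), snd (snd x))"

definition lift :: "site \<Rightarrow> face" where
  "lift z = (int (fst z), int (fst (snd z)), snd (snd z))"

lemma proj_in_Lam: "L \<ge> 1 \<Longrightarrow> proj L x \<in> Lam L"
  unfolding proj_def Lam_def by (auto simp: nat_less_iff)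

lemma proj_lift: "z \<in> Lam L \<Longrightarrow> proj L (lift z) = z"
  unfolding proj_def lift_def Lam_def by auto

lemma proj_eq_iff:
  assumes "L \<ge> 1"
  shows "proj L (u, v, t) = proj L (u', v', t') \<longleftrightarrow>
    int L dvd u - u' \<and> int L dvd v - v' \<and> t = t'"
proof -
  have "u mod int L \<ge> 0" "u' mod int L \<ge> 0" "v mod int L \<ge> 0" "v' mod int L \<ge> 0"
    using assms by auto
  then show ?thesis unfolding proj_def by (auto simp: eq_nat_nat_iff mod_eq_dvd_iff)
qed

lemma nbrs_sym: "y \<in> set (nbrs x) \<Longrightarrow> x \<in> set (nbrs y)"
  by (cases x rule: nbrs.cases) auto

lemma nbrs_orientation: "y \<in> set (nbrs x) \<Longrightarrow> snd (snd y) \<noteq> snd (snd x)"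
  by (cases x rule: nbrs.cases) auto

lemma constant_of_nbrs_equal:
  assumes "\<And>x y. y \<in> set (nbrs x) \<Longrightarrow> t x = t y"
  shows "t x = t (0, 0, True)"
proof -
  have step_u: "t (u, v, True) = t (u + 1, v, True)" and step_v: "t (u, v, True) = t (u, v + 1, True)" for u v
    using assms[of "(u, v, True)" "(u, v, False)"] assms[of "(u, v, False)" "(u + 1, v, True)"]
      assms[of "(u, v, False)" "(u, v + 1, True)"] by simp_all
  have row: "t (u, v, True) = t (0, v, True)" for u v
  proof (induction u rule: int_induct[where k = 0])
    case (step2 i) then show ?case using step_u[of "i - 1" v] by simp
  qed (use step_u in simp_all)
  have col: "t (0, v, True) = t (0, 0, True)" for v
  proof (induction v rule: int_induct[where k = 0])
    case (step2 i) then show ?case using step_v[of 0 "i - 1"] by simp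
  qed (use step_v in simp_all)
  obtain u v b where x: "x = (u, v, b)" by (cases x)
  show ?thesis using row[of u v] col[of v] assms[of "(u, v, True)" "(u, v, False)"] x by (cases b) simp_all
qed

lemma proj_nbrs_cong:
  assumes "L \<ge> 1" "proj L x = proj L y"
  shows "proj L ` set (nbrs x) = proj L ` set (nbrs y)"
proof -
  obtain u v t u' v' where xy: "x = (u, v, t)" "y = (u', v', t)"
    using assms(2) by (cases x; cases y) (auto simp: proj_def)
  have "int L dvd u - u'" "int L dvd v - v'"
    using assms by (auto simp: xy proj_eq_iff)
  moreover have "(u + a) - (u' + a) = u - u'" "(v + a) - (v' + a) = v - v'" for a :: int
    by simp_all
  ultimately have "proj L (u + a, v + b, c) = proj L (u' + a, v' + b, c)" for a b c
    using assms(1) by (simp only: proj_eq_iff)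
  from this[of 0 0] this[of 0 "-1"] this[of "-1" 0] this[of 0 1] this[of 1 0] show ?thesis
    by (cases t) (simp_all add: xy)
qed

lemma proj_mem_nbrs_sym:
  assumes "L \<ge> 1" "proj L w \<in> proj L ` set (nbrs x)"
  shows "proj L x \<in> proj L ` set (nbrs w)"
proof -
  obtain y where "y \<in> set (nbrs x)" "proj L w = proj L y" using assms(2) by auto
  then show ?thesis using nbrs_sym proj_nbrs_cong[OF assms(1)] by blast
qed

lemma up_nbrs_proj:
  assumes "a < L" "b < L"
  shows "up_nbrs L a b = proj L ` set (nbrs (int a, int b, True))"
proof -
  have "int ((c + L - 1) mod L) = (int c - 1) mod int L" for c
  proof -
    have "int (c + L - 1) = (int c - 1) + int L" using assms by linarith
    then show ?thesis by (simp add: of_nat_mod)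
  qed
  then have "(c + L - 1) mod L = nat ((int c - 1) mod int L)" for c
    by (metis nat_int)
  then show ?thesis unfolding up_nbrs_def proj_def using assms by auto
qed

lemma adj_iff_lift:
  assumes "L \<ge> 1"
  shows "adj L i j \<longleftrightarrow> i \<in> Lam L \<and> j \<in> Lam L \<and> j \<in> proj L ` set (nbrs (lift i))"
proof (cases "i \<in> Lam L \<and> j \<in> Lam L")
  case True
  then obtain a b t c d t' where ij: "i = (a, b, t)" "j = (c, d, t')" "a < L" "b < L" "c < L" "d < L"
    by (cases i; cases j) (auto simp: Lam_def)
  have i: "proj L (lift i) = i" and j: "proj L (lift j) = j" using True proj_lift by blast+
  have "i \<in> proj L ` set (nbrs (lift j)) \<longleftrightarrow> j \<in> proj L ` set (nbrs (lift i))"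
    using proj_mem_nbrs_sym[OF assms, of "lift i" "lift j"] proj_mem_nbrs_sym[OF assms, of "lift j" "lift i"]
    unfolding i j by blast
  moreover have "j \<in> proj L ` set (nbrs (lift i)) \<Longrightarrow> t' \<noteq> t"
    using nbrs_orientation by (fastforce simp: ij lift_def proj_def)
  ultimately show ?thesis
    using True by (auto simp: adj_def ij up_nbrs_proj lift_def)
qed (auto simp: adj_def)

lemma adj_proj:
  assumes "L \<ge> 1"
  shows "adj L (proj L x) w \<longleftrightarrow> w \<in> proj L ` set (nbrs x)"
proof -
  have "proj L ` set (nbrs (lift (proj L x))) = proj L ` set (nbrs x)"
    using assms by (intro proj_nbrs_cong) (simp_all add: proj_lift proj_in_Lam)
  then show ?thesis using assms by (auto simp: adj_iff_lift proj_in_Lam)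
qed

lemma distinct_proj_nbrs:
  assumes "L \<ge> 2"
  shows "distinct (map (proj L) (nbrs x))"
proof -
  have "\<not> int L dvd 1" "\<not> int L dvd -1" using assms by auto
  then show ?thesis using assms by (cases x rule: nbrs.cases) (auto simp: proj_eq_iff)
qed

section \<open>The energy of a single flip\<close>

lemma adj_irrefl: "\<not> adj L i i"
  by (cases i) (auto simp: adj_def up_nbrs_def)

lemma adj_sym: "adj L i j \<longleftrightarrow> adj L j i"
  unfolding adj_def by auto

lemma finite_Lam: "finite (Lam L)"
  unfolding Lam_def by simp

lemma finite_edges: "finite (edges L)"
proof -
  have "edges L \<subseteq> Pow (Lam L)" unfolding edges_def adj_def by auto
  then show ?thesis using finite_Lam finite_subset by blast
qed

lemma edges_containing: "{e \<in> edges L. z \<in> e} = (\<lambda>w. {z, w}) ` {w. adj L z w}"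
proof
  show "{e \<in> edges L. z \<in> e} \<subseteq> (\<lambda>w. {z, w}) ` {w. adj L z w}"
    unfolding edges_def using adj_sym by (auto simp: insert_commute)
qed (unfold edges_def, blast)

lemma bond_sum_flip:
  "(\<Sum>e\<in>edges L. \<Prod>i\<in>e. real_of_int (flip \<sigma> z i)) - (\<Sum>e\<in>edges L. \<Prod>i\<in>e. real_of_int (\<sigma> i))
     = - 2 * (\<Sum>w | adj L z w. real_of_int (\<sigma> z) * real_of_int (\<sigma> w))"
proof -
  let ?E = "edges L" and ?Ez = "{e \<in> edges L. z \<in> e}" and ?N = "{w. adj L z w}"
  let ?f = "\<lambda>\<tau> e. \<Prod>i\<in>e. real_of_int (\<tau> i)"
  have split: "sum (?f \<tau>) ?E = sum (?f \<tau>) ?Ez + sum (?f \<tau>) (?E - ?Ez)" for \<tau>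
    using finite_edges by (metis (no_types, lifting) mem_Collect_eq subsetI sum.subset_diff add.commute)
  have rest: "sum (?f (flip \<sigma> z)) (?E - ?Ez) = sum (?f \<sigma>) (?E - ?Ez)"
    unfolding flip_def by (intro sum.cong prod.cong) auto
  have ne: "adj L z w \<Longrightarrow> z \<noteq> w" for w using adj_irrefl[of L z] by auto
  then have inj: "inj_on (\<lambda>w. {z, w}) ?N" by (auto simp: inj_on_def doubleton_eq_iff)
  have near: "sum (?f \<tau>) ?Ez = (\<Sum>w\<in>?N. real_of_int (\<tau> z) * real_of_int (\<tau> w))" for \<tau>
  proof -
    have "sum (?f \<tau>) ?Ez = (\<Sum>w\<in>?N. ?f \<tau> {z, w})"
      unfolding edges_containing by (simp add: sum.reindex[OF inj])
    also have "\<dots> = (\<Sum>w\<in>?N. real_of_int (\<tau> z) * real_of_int (\<tau> w))"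
      by (intro sum.cong refl) (simp add: ne)
    finally show ?thesis .
  qed
  have "sum (?f (flip \<sigma> z)) ?Ez = (\<Sum>w\<in>?N. - (real_of_int (\<sigma> z) * real_of_int (\<sigma> w)))"
    unfolding near flip_def using adj_irrefl by (intro sum.cong refl) (auto simp del: split_paired_All)
  then have "sum (?f (flip \<sigma> z)) ?Ez = - (\<Sum>w\<in>?N. real_of_int (\<sigma> z) * real_of_int (\<sigma> w))"
    by (simp add: sum_negf)
  then show ?thesis unfolding split[of "flip \<sigma> z"] split[of \<sigma>] rest near by simp
qed

lemma spin_sum_flip:
  assumes "z \<in> Lam L"
  shows "(\<Sum>i\<in>Lam L. real_of_int (flip \<sigma> z i)) - (\<Sum>i\<in>Lam L. real_of_int (\<sigma> i)) = - 2 * real_of_int (\<sigma> z)"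
proof -
  have "(\<Sum>i\<in>Lam L. real_of_int (\<tau> i)) = real_of_int (\<tau> z) + (\<Sum>i\<in>Lam L - {z}. real_of_int (\<tau> i))" for \<tau>
    using assms finite_Lam by (simp add: sum.remove)
  moreover have "(\<Sum>i\<in>Lam L - {z}. real_of_int (flip \<sigma> z i)) = (\<Sum>i\<in>Lam L - {z}. real_of_int (\<sigma> i))"
    unfolding flip_def by (intro sum.cong) auto
  ultimately show ?thesis unfolding flip_def by simp
qed

lemma Ham_flip:
  assumes "L \<ge> 2"
  shows "Ham L J h (flip \<sigma> (proj L x)) - Ham L J h \<sigma> =
    real_of_int (\<sigma> (proj L x)) * (J * real_of_int (\<Sum>y\<leftarrow>nbrs x. \<sigma> (proj L y)) + h)"
proof -
  let ?z = "proj L x"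
  have z: "?z \<in> Lam L" using assms proj_in_Lam by simp
  have "{w. adj L ?z w} = set (map (proj L) (nbrs x))"
    using assms adj_proj[of L x] by auto
  then have nbr: "(\<Sum>w | adj L ?z w. real_of_int (\<sigma> w)) = real_of_int (\<Sum>y\<leftarrow>nbrs x. \<sigma> (proj L y))"
    using sum.distinct_set_conv_list[OF distinct_proj_nbrs[OF assms]]
    by (simp add: sum_list_of_int[symmetric] o_def)
  have "Ham L J h (flip \<sigma> ?z) - Ham L J h \<sigma> = - (J/2) *
      ((\<Sum>e\<in>edges L. \<Prod>i\<in>e. real_of_int (flip \<sigma> ?z i)) - (\<Sum>e\<in>edges L. \<Prod>i\<in>e. real_of_int (\<sigma> i)))
    - (h/2) * ((\<Sum>i\<in>Lam L. real_of_int (flip \<sigma> ?z i)) - (\<Sum>i\<in>Lam L. real_of_int (\<sigma> i)))"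
    unfolding Ham_def by (simp only: right_diff_distrib)
  also have "\<dots> = real_of_int (\<sigma> ?z) * (J * (\<Sum>w | adj L ?z w. real_of_int (\<sigma> w)) + h)"
    unfolding bond_sum_flip spin_sum_flip[OF z]
    by (simp add: sum_distrib_left algebra_simps)
  finally show ?thesis unfolding nbr .
qed

section \<open>Escapes\<close>

definition nbr_sum :: "(face \<Rightarrow> int) \<Rightarrow> face \<Rightarrow> int" where
  "nbr_sum s x = (\<Sum>y\<leftarrow>nbrs x. s y)"

definition flip_cost :: "real \<Rightarrow> real \<Rightarrow> (face \<Rightarrow> int) \<Rightarrow> face \<Rightarrow> real" where
  "flip_cost J h s x = real_of_int (s x) * (J * real_of_int (nbr_sum s x) + h)"

definition flip_lifts :: "nat \<Rightarrow> (face \<Rightarrow> int) \<Rightarrow> face \<Rightarrow> face \<Rightarrow> int" where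
  "flip_lifts L s x = (\<lambda>y. if proj L y = proj L x then - s y else s y)"

text \<open>\<open>e\<close> is the energy of the current configuration relative to the initial one.\<close>

fun escapes :: "nat \<Rightarrow> real \<Rightarrow> real \<Rightarrow> real \<Rightarrow> (face \<Rightarrow> int) \<Rightarrow> face list \<Rightarrow> bool" where
  "escapes L J h e s [] \<longleftrightarrow> e < 0"
| "escapes L J h e s (x # xs) \<longleftrightarrow>
     e + flip_cost J h s x \<le> 2 * J \<and> escapes L J h (e + flip_cost J h s x) (flip_lifts L s x) xs"

lemma escapes_mono: "escapes L J h e s xs \<Longrightarrow> e' \<le> e \<Longrightarrow> escapes L J h e' s xs"
  by (induction xs arbitrary: e e' s) auto

lemma finite_conf: "finite (conf L)"
proof -
  have "finite {f. \<forall>x. (x \<in> Lam L \<longrightarrow> f x \<in> {-1, 1::int}) \<and> (x \<notin> Lam L \<longrightarrow> f x = 0)}"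
    by (rule finite_set_of_finite_funs[OF finite_Lam]) simp
  then show ?thesis unfolding conf_def .
qed

lemma flip_in_conf: "\<sigma> \<in> conf L \<Longrightarrow> z \<in> Lam L \<Longrightarrow> flip \<sigma> z \<in> conf L"
  unfolding conf_def flip_def by auto

lemma flip_comp_proj: "flip \<sigma> (proj L x) \<circ> proj L = flip_lifts L (\<sigma> \<circ> proj L) x"
  unfolding flip_lifts_def flip_def by (auto simp: fun_eq_iff)

lemma is_path_Cons:
  assumes "is_path L \<omega>" "\<sigma> \<in> conf L" "z \<in> Lam L" "hd \<omega> = flip \<sigma> z"
  shows "is_path L (\<sigma> # \<omega>)"
  unfolding is_path_def
proof (intro conjI allI impI)
  show "set (\<sigma> # \<omega>) \<subseteq> conf L" using assms(1,2) unfolding is_path_def by auto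
  fix k assume k: "Suc k < length (\<sigma> # \<omega>)"
  show "\<exists>x\<in>Lam L. (\<sigma> # \<omega>) ! Suc k = flip ((\<sigma> # \<omega>) ! k) x"
  proof (cases k)
    case 0
    then show ?thesis using assms k by (auto simp: hd_conv_nth)
  next
    case (Suc k')
    then show ?thesis using assms(1) k unfolding is_path_def by auto
  qed
qed simp

lemma escapes_imp_path:
  assumes "L \<ge> 2" "escapes L J h e (\<sigma> \<circ> proj L) xs" "\<sigma> \<in> conf L" "e \<le> 2 * J"
  shows "\<exists>\<omega> \<eta>. \<omega> \<in> paths L \<sigma> \<eta> \<and> (\<forall>\<tau>\<in>set \<omega>. Ham L J h \<tau> - Ham L J h \<sigma> + e \<le> 2 * J)
    \<and> Ham L J h \<eta> - Ham L J h \<sigma> + e < 0"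
  using assms(2-)
proof (induction xs arbitrary: \<sigma> e)
  case Nil
  then show ?case
    by (intro exI[of _ "[\<sigma>]"] exI[of _ \<sigma>]) (auto simp: paths_def is_path_def)
next
  case (Cons x xs)
  let ?z = "proj L x"
  let ?e = "e + flip_cost J h (\<sigma> \<circ> proj L) x"
  have z: "?z \<in> Lam L" using assms(1) proj_in_Lam by simp
  have cost: "Ham L J h (flip \<sigma> ?z) - Ham L J h \<sigma> = flip_cost J h (\<sigma> \<circ> proj L) x"
    unfolding Ham_flip[OF assms(1)] flip_cost_def nbr_sum_def by (simp add: o_def)
  have "escapes L J h ?e (flip \<sigma> ?z \<circ> proj L) xs" "?e \<le> 2 * J"
    using Cons.prems(1) unfolding flip_comp_proj by (simp_all del: comp_apply)
  then obtain \<omega> \<eta> where \<omega>: "\<omega> \<in> paths L (flip \<sigma> ?z) \<eta>"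
      "\<forall>\<tau>\<in>set \<omega>. Ham L J h \<tau> - Ham L J h (flip \<sigma> ?z) + ?e \<le> 2 * J"
      "Ham L J h \<eta> - Ham L J h (flip \<sigma> ?z) + ?e < 0"
    using Cons.IH flip_in_conf[OF Cons.prems(2) z] by blast
  then have "\<omega> \<noteq> []" "is_path L (\<sigma> # \<omega>)"
    using is_path_Cons[OF _ Cons.prems(2) z] unfolding paths_def is_path_def by auto
  then have "\<sigma> # \<omega> \<in> paths L \<sigma> \<eta>" using \<omega>(1) unfolding paths_def by auto
  then show ?case using \<omega>(2,3) cost Cons.prems(3) by (intro exI[of _ "\<sigma> # \<omega>"] exI[of _ \<eta>]) auto
qed

lemma Phi_le_path:
  assumes "\<omega> \<in> paths L \<sigma> \<eta>"
  shows "Phi L J h \<sigma> \<eta> \<le> Max (Ham L J h ` set \<omega>)"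
proof -
  let ?F = "\<lambda>\<omega>. Max (Ham L J h ` set \<omega>)"
  have "?F ` paths L \<sigma> \<eta> \<subseteq> Ham L J h ` conf L"
  proof
    fix y assume "y \<in> ?F ` paths L \<sigma> \<eta>"
    then obtain \<omega>' where \<omega>': "y = ?F \<omega>'" "set \<omega>' \<subseteq> conf L" "\<omega>' \<noteq> []"
      unfolding paths_def is_path_def by auto
    then have "?F \<omega>' \<in> Ham L J h ` set \<omega>'" by (intro Max_in) auto
    then show "y \<in> Ham L J h ` conf L" using \<omega>' by blast
  qed
  then have "finite (?F ` paths L \<sigma> \<eta>)" using finite_conf finite_subset by blast
  then show ?thesis unfolding Phi_def using assms by (intro Min_le) auto
qed

lemma stab_le_path:
  assumes "\<omega> \<in> paths L \<sigma> \<eta>" "\<forall>\<tau>\<in>set \<omega>. Ham L J h \<tau> \<le> Ham L J h \<sigma> + B"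
    and "Ham L J h \<eta> < Ham L J h \<sigma>"
  shows "stab L J h \<sigma> \<le> ereal B"
proof -
  have \<omega>: "set \<omega> \<subseteq> conf L" "\<omega> \<noteq> []" "last \<omega> = \<eta>"
    using assms(1) unfolding paths_def is_path_def by auto
  then have \<eta>: "\<eta> \<in> Iset L J h \<sigma>" using assms(3) unfolding Iset_def by auto
  have "Max (Ham L J h ` set \<omega>) \<le> Ham L J h \<sigma> + B"
    using assms(2) \<omega>(2) by (subst Max_le_iff) auto
  then have "Phi L J h \<sigma> \<eta> \<le> Ham L J h \<sigma> + B"
    using Phi_le_path[OF assms(1)] by (rule order_trans[rotated])
  moreover have "PhiSet L J h {\<sigma>} (Iset L J h \<sigma>) \<le> Phi L J h \<sigma> \<eta>"
  proof -
    have "{Phi L J h \<sigma>' \<eta>' | \<sigma>' \<eta>'. \<sigma>' \<in> {\<sigma>} \<and> \<eta>' \<in> Iset L J h \<sigma>} = Phi L J h \<sigma> ` Iset L J h \<sigma>"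
      by auto
    moreover have "finite (Iset L J h \<sigma>)" using finite_conf unfolding Iset_def by auto
    ultimately show ?thesis unfolding PhiSet_def using \<eta> by (intro Min_le) auto
  qed
  ultimately show ?thesis unfolding stab_def using \<eta> by auto
qed

lemma stab_le_of_escapes:
  assumes "L \<ge> 2" "\<sigma> \<in> conf L" "escapes L J h 0 (\<sigma> \<circ> proj L) xs" "J \<ge> 0"
  shows "stab L J h \<sigma> \<le> ereal (2 * J)"
proof -
  obtain \<omega> \<eta> where "\<omega> \<in> paths L \<sigma> \<eta>" "\<forall>\<tau>\<in>set \<omega>. Ham L J h \<tau> - Ham L J h \<sigma> \<le> 2 * J"
     "Ham L J h \<eta> - Ham L J h \<sigma> < 0"
    using escapes_imp_path[OF assms(1,3,2)] assms(4) by auto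
  then show ?thesis by (intro stab_le_path) auto
qed

section \<open>Lattice symmetries\<close>

text \<open>\<open>rot\<close> is a rotation by 60 degrees.\<close>

fun rot :: "face \<Rightarrow> face" where
  "rot (u, v, True) = (- v - 1, u + v, False)"
| "rot (u, v, False) = (- v - 1, u + v + 1, True)"

fun shift :: "int \<Rightarrow> int \<Rightarrow> face \<Rightarrow> face" where
  "shift a b (u, v, t) = (u + a, v + b, t)"

definition torus_aut :: "nat \<Rightarrow> (face \<Rightarrow> face) \<Rightarrow> bool" where
  "torus_aut L g \<longleftrightarrow> (\<forall>x. mset (nbrs (g x)) = mset (map g (nbrs x))) \<and>
     (\<forall>x y. proj L (g x) = proj L (g y) \<longleftrightarrow> proj L x = proj L y)"

lemma torus_aut_nbrs: "torus_aut L g \<Longrightarrow> mset (nbrs (g x)) = mset (map g (nbrs x))"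
  unfolding torus_aut_def by blast

lemma torus_aut_proj_iff: "torus_aut L g \<Longrightarrow> proj L (g x) = proj L (g y) \<longleftrightarrow> proj L x = proj L y"
  unfolding torus_aut_def by blast

lemma torus_aut_comp:
  assumes "torus_aut L f" "torus_aut L g"
  shows "torus_aut L (f \<circ> g)"
proof -
  have "mset (nbrs (f (g x))) = mset (map (f \<circ> g) (nbrs x))" for x
    using torus_aut_nbrs[OF assms(1), of "g x"] torus_aut_nbrs[OF assms(2), of x]
    by (simp add: multiset.map_comp)
  then show ?thesis using torus_aut_proj_iff[OF assms(1)] torus_aut_proj_iff[OF assms(2)]
    unfolding torus_aut_def by simp
qed

lemma torus_aut_id: "torus_aut L id"
  unfolding torus_aut_def by simp

lemma torus_aut_rot:
  assumes "L \<ge> 1"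
  shows "torus_aut L rot"
proof -
  have "mset (nbrs (rot x)) = mset (map rot (nbrs x))" for x
    by (cases x rule: nbrs.cases) (auto simp: add_mset_commute algebra_simps)
  moreover have key: "int L dvd v' - v \<and> int L dvd u + v - (u' + v') \<longleftrightarrow>
      int L dvd u - u' \<and> int L dvd v - v'" for u v u' v' :: int
  proof -
    have "u + v - (u' + v') = (u - u') + (v - v')" "v' - v = - (v - v')" by simp_all
    then show ?thesis by (metis dvd_add_left_iff dvd_minus_iff)
  qed
  then have "proj L (rot x) = proj L (rot y) \<longleftrightarrow> proj L x = proj L y" for x y
    using assms by (cases x rule: nbrs.cases; cases y rule: nbrs.cases)
      (simp_all add: proj_eq_iff algebra_simps key)
  ultimately show ?thesis unfolding torus_aut_def by blast
qed

lemma torus_aut_shift: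
  assumes "L \<ge> 1"
  shows "torus_aut L (shift a b)"
proof -
  have "mset (nbrs (shift a b x)) = mset (map (shift a b) (nbrs x))" for x
    by (cases x rule: nbrs.cases) (auto simp: algebra_simps)
  moreover have "proj L (shift a b x) = proj L (shift a b y) \<longleftrightarrow> proj L x = proj L y" for x y
    using assms by (cases x; cases y) (simp add: proj_eq_iff)
  ultimately show ?thesis unfolding torus_aut_def by blast
qed

lemma oriented_edge_frame:
  assumes "L \<ge> 1" "y \<in> set (nbrs x)"
  shows "\<exists>g. torus_aut L g \<and> g (0, 0, True) = x \<and> g (0, -1, False) = y"
proof -
  have R: "torus_aut L rot" and T: "torus_aut L (shift a b)" for a b
    using torus_aut_rot torus_aut_shift assms(1) by blast+
  obtain u v t where x: "x = (u, v, t)" by (cases x)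
  show ?thesis
  proof (cases t)
    case True
    then consider "y = (u, v, False)" | "y = (u, v - 1, False)" | "y = (u - 1, v, False)"
      using assms(2) x by auto
    then show ?thesis
    proof cases
      case 1
      show ?thesis by (rule exI[of _ "shift (u + 1) v \<circ> rot \<circ> rot"]) (simp add: 1 x True torus_aut_comp R T)
    next
      case 2
      show ?thesis by (rule exI[of _ "shift u v"]) (simp add: 2 x True T)
    next
      case 3
      show ?thesis
        by (rule exI[of _ "shift u (v + 1) \<circ> rot \<circ> rot \<circ> rot \<circ> rot"]) (simp add: 3 x True torus_aut_comp R T)
    qed
  next
    case False
    then consider "y = (u, v, True)" | "y = (u, v + 1, True)" | "y = (u + 1, v, True)"
      using assms(2) x by auto
    then show ?thesis
    proof cases
      case 1
      show ?thesis
        by (rule exI[of _ "shift u (v + 1) \<circ> rot \<circ> rot \<circ> rot \<circ> rot \<circ> rot"])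
          (simp add: 1 x False torus_aut_comp R T)
    next
      case 2
      show ?thesis
        by (rule exI[of _ "shift (u + 1) (v + 1) \<circ> rot \<circ> rot \<circ> rot"]) (simp add: 2 x False torus_aut_comp R T)
    next
      case 3
      show ?thesis by (rule exI[of _ "shift (u + 1) v \<circ> rot"]) (simp add: 3 x False torus_aut_comp R T)
    qed
  qed
qed

lemma nbr_sum_torus_aut:
  assumes "torus_aut L g"
  shows "nbr_sum t (g x) = nbr_sum (t \<circ> g) x"
proof -
  have "nbr_sum t (g x) = sum_mset (image_mset t (mset (nbrs (g x))))"
    unfolding nbr_sum_def by (simp flip: sum_mset_sum_list)
  also have "\<dots> = sum_mset (image_mset (t \<circ> g) (mset (nbrs x)))"
    using torus_aut_nbrs[OF assms] by (simp add: multiset.map_comp)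
  finally show ?thesis unfolding nbr_sum_def by (simp flip: sum_mset_sum_list)
qed

lemma nbrs_torus_aut:
  assumes "torus_aut L g" "y \<in> set (nbrs x)"
  shows "g y \<in> set (nbrs (g x))"
proof -
  have "set_mset (mset (nbrs (g x))) = g ` set (nbrs x)"
    using torus_aut_nbrs[OF assms(1)] by simp
  then show ?thesis using assms(2) by simp
qed

lemma torus_aut_proj_neq:
  assumes "L \<ge> 1" "torus_aut L g" "z \<noteq> z'"
    and "\<bar>fst z - fst z'\<bar> < int L" "\<bar>fst (snd z) - fst (snd z')\<bar> < int L"
  shows "proj L (g z) \<noteq> proj L (g z')"
proof
  have small: "d = 0" if "int L dvd d" "\<bar>d\<bar> < int L" for d :: int
  proof (rule ccontr)
    assume "d \<noteq> 0"
    then have "\<bar>int L\<bar> \<le> \<bar>d\<bar>" using that(1) by (rule dvd_imp_le_int)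
    then show False using that(2) by simp
  qed
  obtain u v t u' v' t' where zz: "z = (u, v, t)" "z' = (u', v', t')" by (cases z; cases z')
  assume "proj L (g z) = proj L (g z')"
  then have "proj L z = proj L z'" using torus_aut_proj_iff[OF assms(2)] by blast
  then have "int L dvd u - u'" "int L dvd v - v'" "t = t'" using assms(1) by (simp_all add: zz proj_eq_iff)
  then have "u - u' = 0" "v - v' = 0" using assms(4,5) small[of "u - u'"] small[of "v - v'"] by (simp_all add: zz)
  then show False using assms(3) \<open>t = t'\<close> zz by simp
qed

section \<open>Local stability\<close>

definition pm_field :: "(face \<Rightarrow> int) \<Rightarrow> bool" where
  "pm_field t \<longleftrightarrow> (\<forall>y. t y = 1 \<or> t y = -1)"

definition locally_stable :: "(face \<Rightarrow> int) \<Rightarrow> bool" where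
  "locally_stable t \<longleftrightarrow> (\<forall>x. t x = 1 \<longrightarrow> nbr_sum t x \<ge> 1) \<and> (\<forall>x. t x = -1 \<longrightarrow> nbr_sum t x \<le> -1) \<and>
     (\<forall>x y. y \<in> set (nbrs x) \<and> t x = -1 \<and> t y = -1 \<longrightarrow> nbr_sum t x < -1 \<or> nbr_sum t y < -1)"

lemma nbr_sum_up: "nbr_sum t (u, v, True) = t (u, v, False) + t (u, v - 1, False) + t (u - 1, v, False)"
  unfolding nbr_sum_def by simp

lemma nbr_sum_down: "nbr_sum t (u, v, False) = t (u, v, True) + t (u, v + 1, True) + t (u + 1, v, True)"
  unfolding nbr_sum_def by simp

lemma pm_field_comp: "pm_field t \<Longrightarrow> pm_field (t \<circ> g)"
  unfolding pm_field_def comp_def by blast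

lemma locally_stable_comp:
  assumes "locally_stable t" "torus_aut L g"
  shows "locally_stable (t \<circ> g)"
proof -
  have "nbr_sum (t \<circ> g) x = nbr_sum t (g x)" for x by (rule nbr_sum_torus_aut[OF assms(2), symmetric])
  then show ?thesis using assms(1) nbrs_torus_aut[OF assms(2)]
    unfolding locally_stable_def by (simp only: comp_apply) blast
qed

lemma boundary_step:
  assumes pm: "pm_field t" and st: "locally_stable t" and "t (0, 0, True) = 1" "t (0, -1, False) = -1"
  shows "t (0, -1, True) = -1" "t (1, -1, True) = -1" "t (1, -1, False) = -1" "t (1, -2, False) = -1"
    "t (0, 0, False) = 1" "t (-1, 0, False) = 1"
proof -
  have pm': "t y = 1 \<or> t y = -1" for y using pm unfolding pm_field_def by blast
  have plus: "t x = 1 \<Longrightarrow> nbr_sum t x \<ge> 1" and minus: "t x = -1 \<Longrightarrow> nbr_sum t x \<le> -1"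
    and pair: "y \<in> set (nbrs x) \<Longrightarrow> t x = -1 \<Longrightarrow> t y = -1 \<Longrightarrow> nbr_sum t x < -1 \<or> nbr_sum t y < -1"
    for x y using st unfolding locally_stable_def by blast+
  have "t (0, -1, True) + t (0, 0, True) + t (1, -1, True) \<le> -1"
    using minus[of "(0, -1, False)"] assms(4) by (simp add: nbr_sum_down)
  then show up: "t (0, -1, True) = -1" "t (1, -1, True) = -1"
    using assms(3) pm'[of "(0, -1, True)"] pm'[of "(1, -1, True)"] by linarith+
  have "\<not> nbr_sum t (0, -1, False) < -1" using up assms(3) by (simp add: nbr_sum_down)
  then have "t (1, -1, False) + t (1, -2, False) + t (0, -1, False) < -1"
    using pair[of "(0, -1, False)" "(1, -1, True)"] up(2) assms(4) by (simp add: nbr_sum_up)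
  then show "t (1, -1, False) = -1" "t (1, -2, False) = -1"
    using assms(4) pm'[of "(1, -1, False)"] pm'[of "(1, -2, False)"] by linarith+
  have "t (0, 0, False) + t (0, -1, False) + t (-1, 0, False) \<ge> 1"
    using plus[of "(0, 0, True)"] assms(3) by (simp add: nbr_sum_up)
  then show "t (0, 0, False) = 1" "t (-1, 0, False) = 1"
    using assms(4) pm'[of "(0, 0, False)"] pm'[of "(-1, 0, False)"] by linarith+
qed

lemma boundary_step_shift:
  assumes "pm_field t" "locally_stable t" "t (k, 0, True) = 1" "t (k, -1, False) = -1"
  shows "t (k, -1, True) = -1" "t (k + 1, -1, True) = -1" "t (k + 1, -1, False) = -1"
    "t (k + 1, -2, False) = -1" "t (k, 0, False) = 1" "t (k - 1, 0, False) = 1"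
  using boundary_step[OF pm_field_comp[OF assms(1)] locally_stable_comp[OF assms(2) torus_aut_shift[of 1]],
      of k 0] assms(3,4)
  by (simp_all add: add.commute)

lemma boundary_walk:
  assumes "pm_field t" "locally_stable t" "t (0, 0, True) = 1" "t (0, -1, False) = -1"
    and row: "\<forall>k::int. 1 \<le> k \<and> k \<le> n \<longrightarrow> t (k, 0, True) = 1"
    and "0 \<le> k" "k \<le> n"
  shows "t (k, 0, True) = 1 \<and> t (k, -1, False) = -1"
proof -
  have "t (int i, 0, True) = 1 \<and> t (int i, -1, False) = -1" if "int i \<le> n" for i :: nat
    using that
  proof (induction i)
    case (Suc i)
    then show ?case using boundary_step_shift(3)[OF assms(1,2), of "int i"] row by (simp add: add.commute)
  qed (use assms(3,4) in simp)
  then show ?thesis using assms(6,7) by (metis nonneg_int_cases)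
qed

locale periodic_field =
  fixes L :: nat and J h :: real and s :: "face \<Rightarrow> int"
  assumes L2: "L \<ge> 2" and h_pos: "0 < h" and J_ge: "2 * h \<le> J"
    and pm: "pm_field s" and periodic: "\<And>x y. proj L x = proj L y \<Longrightarrow> s x = s y"
begin

lemma L1: "L \<ge> 1"
  using L2 by simp

lemma J_pos: "J > 0"
  using h_pos J_ge by simp

lemma s_cases: "s y = 1 \<or> s y = -1"
  using pm unfolding pm_field_def by blast

definition flipped :: "face set \<Rightarrow> face \<Rightarrow> int" where
  "flipped A = (\<lambda>y. if \<exists>a\<in>A. proj L a = proj L y then - s y else s y)"

lemma flipped_empty: "flipped {} = s"
  unfolding flipped_def by simp

lemma flip_lifts_flipped: "\<forall>a\<in>A. proj L a \<noteq> proj L x \<Longrightarrow> flip_lifts L (flipped A) x = flipped (insert x A)"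
  unfolding flip_lifts_def flipped_def by (auto simp: fun_eq_iff)

lemma flipped_out: "\<forall>a\<in>A. proj L a \<noteq> proj L y \<Longrightarrow> flipped A y = s y"
  unfolding flipped_def by auto

lemma flipped_le: "flipped A y \<le> 1"
  unfolding flipped_def using s_cases[of y] by auto

lemma flipped_ge: "flipped A y \<ge> -1"
  unfolding flipped_def using s_cases[of y] by auto

lemma flipped_in: "y \<in> A \<Longrightarrow> flipped A y = - s y"
  unfolding flipped_def by auto

lemma flipped_unchanged:
  assumes "\<forall>a\<in>A. s a \<noteq> s y"
  shows "flipped A y = s y"
proof -
  have "proj L a \<noteq> proj L y" if "a \<in> A" for a
    using assms that periodic by blast
  then show ?thesis by (intro flipped_out) blast
qed

lemma flipped_minus:
  assumes "\<forall>a\<in>A. s a = 1" "s y = -1 \<or> y \<in> A"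
  shows "flipped A y = -1"
  using assms flipped_in[of y A] flipped_unchanged[of A y] by force

lemma flipped_plus:
  assumes "\<forall>a\<in>A. s a = -1" "s y = 1 \<or> y \<in> A"
  shows "flipped A y = 1"
  using assms flipped_in[of y A] flipped_unchanged[of A y] by force

lemma escapes_flip:
  assumes "\<forall>a\<in>A. proj L a \<noteq> proj L y" "flip_cost J h (flipped A) y \<le> c" "e + c \<le> 2 * J"
    and "escapes L J h (e + c) (flipped (insert y A)) xs"
  shows "escapes L J h e (flipped A) (y # xs)"
proof -
  have "escapes L J h (e + flip_cost J h (flipped A) y) (flipped (insert y A)) xs"
    using escapes_mono[OF assms(4)] assms(2) by simp
  then show ?thesis using assms(1,2,3) by (simp add: flip_lifts_flipped)
qed

lemma escapes_flip_plus:
  assumes g: "torus_aut L g" and "\<forall>a\<in>A. proj L a \<noteq> proj L (g x)" "s (g x) = 1"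
    and "nbr_sum (flipped A \<circ> g) x \<le> k" "e + (J * k + h) \<le> 2 * J"
    and "escapes L J h (e + (J * k + h)) (flipped (insert (g x) A)) xs"
  shows "escapes L J h e (flipped A) (g x # xs)"
proof (rule escapes_flip[OF assms(2) _ assms(5,6)])
  have "J * nbr_sum (flipped A \<circ> g) x \<le> J * k" using assms(4) J_pos by simp
  then show "flip_cost J h (flipped A) (g x) \<le> J * k + h"
    using flipped_out[OF assms(2)] assms(3)
    by (simp add: flip_cost_def nbr_sum_torus_aut[OF g])
qed

lemma escapes_flip_minus:
  assumes g: "torus_aut L g" and "\<forall>a\<in>A. proj L a \<noteq> proj L (g x)" "s (g x) = -1"
    and "nbr_sum (flipped A \<circ> g) x \<ge> k" "e + (- J * k - h) \<le> 2 * J"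
    and "escapes L J h (e + (- J * k - h)) (flipped (insert (g x) A)) xs"
  shows "escapes L J h e (flipped A) (g x # xs)"
proof (rule escapes_flip[OF assms(2) _ assms(5,6)])
  have "J * nbr_sum (flipped A \<circ> g) x \<ge> J * k" using assms(4) J_pos by simp
  then show "flip_cost J h (flipped A) (g x) \<le> - J * k - h"
    using flipped_out[OF assms(2)] assms(3)
    by (simp add: flip_cost_def nbr_sum_torus_aut[OF g])
qed

lemma proj_apart_Un:
  assumes g: "torus_aut L g" and "\<forall>a\<in>A. proj L a \<noteq> proj L (g x)"
    and "\<And>z. z \<in> Z \<Longrightarrow> z \<noteq> x \<and> \<bar>fst z - fst x\<bar> < int L \<and> \<bar>fst (snd z) - fst (snd x)\<bar> < int L"
  shows "\<forall>b\<in>A \<union> g ` Z. proj L b \<noteq> proj L (g x)"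
proof
  fix b assume "b \<in> A \<union> g ` Z"
  then consider "b \<in> A" | z where "z \<in> Z" "b = g z" by blast
  then show "proj L b \<noteq> proj L (g x)"
  proof cases
    case 2
    then show ?thesis using torus_aut_proj_neq[OF L1 g, of z x] assms(3) by blast
  qed (use assms(2) in blast)
qed

lemma exists_boundary_edge:
  assumes "s zp = 1" "s zm = -1"
  obtains x y where "y \<in> set (nbrs x)" "s x = 1" "s y = -1"
proof -
  have "\<exists>x y. y \<in> set (nbrs x) \<and> s x = 1 \<and> s y = -1"
  proof (rule ccontr)
    assume no_edge: "\<not> ?thesis"
    have "s x = s y" if "y \<in> set (nbrs x)" for x y
    proof -
      have "\<not> (s x = 1 \<and> s y = -1)" "\<not> (s y = 1 \<and> s x = -1)"
        using no_edge that nbrs_sym[OF that] by blast+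
      then show ?thesis using s_cases[of x] s_cases[of y] by auto
    qed
    then have "s z = s (0, 0, True)" for z by (rule constant_of_nbrs_equal)
    then have "s zp = s zm" by (metis (no_types))
    then show False using assms by simp
  qed
  then show ?thesis using that by blast
qed

lemma sum_flip_lifts:
  assumes "distinct (map (proj L) ys)" "x \<in> set ys"
  shows "(\<Sum>y\<leftarrow>ys. flip_lifts L s x y) = (\<Sum>y\<leftarrow>ys. s y) - 2 * s x"
  using assms
proof (induction ys)
  case (Cons y ys)
  show ?case
  proof (cases "y = x")
    case True
    then have "proj L x \<notin> proj L ` set ys" using Cons.prems(1) by simp
    then have "\<forall>z\<in>set ys. proj L z \<noteq> proj L x" by (metis image_eqI)
    then have "(\<Sum>y\<leftarrow>ys. flip_lifts L s x y) = (\<Sum>y\<leftarrow>ys. s y)"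
      unfolding flip_lifts_def by (intro arg_cong[where f = sum_list] map_cong) auto
    then show ?thesis using True unfolding flip_lifts_def by simp
  next
    case False
    then have "x \<in> set ys" "proj L y \<noteq> proj L x" using Cons.prems by auto
    then show ?thesis using Cons.IH Cons.prems(1) unfolding flip_lifts_def by simp
  qed
qed simp

lemma nbr_sum_cases: "nbr_sum s x \<in> {-3, -1, 1, 3}"
  using s_cases[of "nbrs x ! 0"] s_cases[of "nbrs x ! 1"] s_cases[of "nbrs x ! 2"]
  by (cases x rule: nbrs.cases) (auto simp: nbr_sum_def)

lemma escapes_of_unstable:
  assumes "\<not> locally_stable s"
  obtains xs where "escapes L J h 0 s xs"
proof -
  have id: "torus_aut L id" by (rule torus_aut_id)
  have none: "\<forall>a\<in>{}. proj L a \<noteq> proj L y" for y by simp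
  have "(\<exists>x. s x = 1 \<and> nbr_sum s x \<le> -1) \<or> (\<exists>x. s x = -1 \<and> nbr_sum s x \<ge> 1) \<or>
      (\<exists>x y. y \<in> set (nbrs x) \<and> s x = -1 \<and> s y = -1 \<and> nbr_sum s x = -1 \<and> nbr_sum s y \<ge> -1)"
    using assms nbr_sum_cases unfolding locally_stable_def by (smt (verit) insertE singletonD)
  then consider x where "s x = 1" "nbr_sum s x \<le> -1" | x where "s x = -1" "nbr_sum s x \<ge> 1"
    | x y where "y \<in> set (nbrs x)" "s x = -1" "s y = -1" "nbr_sum s x = -1" "nbr_sum s y \<ge> -1"
    by blast
  then show ?thesis
  proof cases
    case (1 x)
    then have "escapes L J h 0 (flipped {}) (id x # [])"
      using h_pos J_ge by (intro escapes_flip_plus[OF id none, where k = "-1"]) (simp_all add: flipped_empty algebra_simps)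
    then show ?thesis by (intro that) (simp only: flipped_empty id_apply)
  next
    case (2 x)
    then have "escapes L J h 0 (flipped {}) (id x # [])"
      using h_pos J_ge by (intro escapes_flip_minus[OF id none, where k = 1]) (simp_all add: flipped_empty algebra_simps)
    then show ?thesis by (intro that) (simp only: flipped_empty id_apply)
  next
    case (3 x y)
    have apart: "\<forall>a\<in>{x}. proj L a \<noteq> proj L (id y)"
      using nbrs_orientation[OF 3(1)] by (auto simp: proj_def)
    have "nbr_sum (flipped {x}) y = nbr_sum s y + 2"
      using sum_flip_lifts[OF distinct_proj_nbrs[OF L2] nbrs_sym[OF 3(1)]] 3(2)
      unfolding nbr_sum_def flip_lifts_flipped[OF none, symmetric] flipped_empty by simp
    then have "escapes L J h (0 + (- J * real_of_int (-1) - h)) (flipped (insert x {})) (id y # [])"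
      using 3 h_pos J_ge by (intro escapes_flip_minus[OF id apart, where k = 1]) (simp_all add: algebra_simps comp_def)
    then have "escapes L J h 0 (flipped {}) (id x # id y # [])"
      using 3 h_pos J_ge by (intro escapes_flip_minus[OF id none, where k = "-1"]) (simp_all add: flipped_empty algebra_simps)
    then show ?thesis by (intro that) (simp only: flipped_empty id_apply)
  qed
qed

end

section \<open>Flipping rows\<close>

text \<open>Eroding a plus row of length \<open>m\<close> lying on minus spins takes \<open>m\<close> pairs of flips, each
  costing \<open>J + h\<close> and then gaining \<open>J - h\<close>, and a last flip gaining \<open>J - h\<close>: the energy peaks at
  \<open>J + (2m - 1)h\<close> and ends at \<open>(2m + 1)h - J\<close>.  Growing a row of length \<open>j\<close> below a plus row
  takes one flip costing \<open>J - h\<close> and \<open>j - 1\<close> pairs costing \<open>J - h\<close> and gaining \<open>J + h\<close>, and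
  ends at \<open>J - (2j - 1)h\<close>.\<close>

definition shrink_pairs :: "nat \<Rightarrow> nat \<Rightarrow> face list" where
  "shrink_pairs n0 n1 = concat (map (\<lambda>k. [(int k - 1, 0, False), (int k, 0, True)]) [n0..<n1])"

definition shrink_seq :: "nat \<Rightarrow> face list" where
  "shrink_seq m = (if m = 0 then [(-1, 0, False)]
     else [(0, 0, True), (-1, 0, False)] @ shrink_pairs 1 m @ [(int m - 1, 0, False)])"

definition plus_row :: "nat \<Rightarrow> face set" where
  "plus_row m = {(i, 0, True) | i. 0 \<le> i \<and> i < int m} \<union> {(i, 0, False) | i. -1 \<le> i \<and> i < int m}"

definition shrunk :: "nat \<Rightarrow> face set" where
  "shrunk n = {(i, 0, True) | i. 0 \<le> i \<and> i < int n} \<union> {(i, 0, False) | i. -1 \<le> i \<and> i < int n - 1}"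

lemma shrink_pairs_Cons:
  "n < n1 \<Longrightarrow> shrink_pairs n n1 = (int n - 1, 0, False) # (int n, 0, True) # shrink_pairs (Suc n) n1"
  unfolding shrink_pairs_def by (simp add: upt_conv_Cons)

lemma plus_row_bounds: "x \<in> plus_row m \<Longrightarrow> -1 \<le> fst x \<and> fst x < int m \<and> fst (snd x) = 0"
  unfolding plus_row_def by auto

lemma shrunk_1: "shrunk 1 = {(0, 0, True), (-1, 0, False)}"
  unfolding shrunk_def by auto

lemma shrunk_Suc: "shrunk (Suc n) = insert (int n, 0, True) (insert (int n - 1, 0, False) (shrunk n))"
  unfolding shrunk_def by auto

lemma plus_row_shrunk: "plus_row m = insert (int m - 1, 0, False) (shrunk m)"
  unfolding plus_row_def shrunk_def by auto

definition grow_pairs :: "nat \<Rightarrow> nat \<Rightarrow> face list" where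
  "grow_pairs n0 n1 = concat (map (\<lambda>k. [(int k, -1, True), (int k, -1, False)]) [n0..<n1])"

definition grow_seq :: "nat \<Rightarrow> face list" where
  "grow_seq j = (0, -1, False) # grow_pairs 1 j"

definition grown :: "nat \<Rightarrow> face set" where
  "grown n = {(i, -1, False) | i. 0 \<le> i \<and> i < int n} \<union> {(i, -1, True) | i. 1 \<le> i \<and> i < int n}"

lemma grow_pairs_Cons:
  "n < n1 \<Longrightarrow> grow_pairs n n1 = (int n, -1, True) # (int n, -1, False) # grow_pairs (Suc n) n1"
  unfolding grow_pairs_def by (simp add: upt_conv_Cons)

lemma grown_1: "grown 1 = {(0, -1, False)}"
  unfolding grown_def by auto

lemma grown_Suc: "n \<ge> 1 \<Longrightarrow> grown (Suc n) = insert (int n, -1, False) (insert (int n, -1, True) (grown n))"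
  unfolding grown_def by auto

lemma grown_bounds: "x \<in> grown n \<Longrightarrow> 0 \<le> fst x \<and> fst x < int n \<and> fst (snd x) = -1"
  unfolding grown_def by auto

lemma shrunk_subset: "n \<le> m \<Longrightarrow> shrunk n \<subseteq> plus_row m"
  unfolding shrunk_def plus_row_def by auto

lemma grown_subset: "n \<le> j \<Longrightarrow> grown n \<subseteq> grown j"
  unfolding grown_def by auto

context periodic_field
begin

context
  fixes g :: "face \<Rightarrow> face" and A :: "face set" and m :: nat
  assumes g: "torus_aut L g" and box: "int m + 2 \<le> int L"
    and A_plus: "\<forall>a\<in>A. s a = 1"
    and A_apart: "\<forall>a\<in>A. \<forall>x\<in>plus_row m. proj L a \<noteq> proj L (g x)"
    and row_plus: "\<forall>x\<in>plus_row m. s (g x) = 1"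
    and below_minus: "\<forall>k::int. 0 \<le> k \<and> k < int m \<longrightarrow> s (g (k, -1, False)) = -1"
    and left_end: "s (g (-1, 0, True)) = -1 \<or> g (-1, 0, True) \<in> A"
    and right_end: "s (g (int m, 0, True)) = -1 \<or> g (int m, 0, True) \<in> A"
begin

lemma plus_row_flipped_minus:
  assumes "Z \<subseteq> plus_row m" "s (g y) = -1 \<or> g y \<in> A \<or> y \<in> Z"
  shows "flipped (A \<union> g ` Z) (g y) = -1"
  using assms A_plus row_plus by (intro flipped_minus) auto

lemma shrink_flip:
  assumes Z: "Z \<subseteq> plus_row m" "x \<in> plus_row m" "x \<notin> Z"
    and "nbr_sum (flipped (A \<union> g ` Z) \<circ> g) x \<le> k" "e + (J * k + h) \<le> 2 * J"
    and "escapes L J h (e + (J * k + h)) (flipped (A \<union> g ` insert x Z)) xs"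
  shows "escapes L J h e (flipped (A \<union> g ` Z)) (g x # xs)"
proof (rule escapes_flip_plus[OF g _ _ assms(4,5)])
  show "\<forall>b\<in>A \<union> g ` Z. proj L b \<noteq> proj L (g x)"
  proof (rule proj_apart_Un[OF g])
    fix z assume "z \<in> Z"
    then have "z \<in> plus_row m" "z \<noteq> x" using Z by auto
    then show "z \<noteq> x \<and> \<bar>fst z - fst x\<bar> < int L \<and> \<bar>fst (snd z) - fst (snd x)\<bar> < int L"
      using plus_row_bounds[of z m] plus_row_bounds[of x m] Z(2) box by auto
  qed (use A_apart Z in blast)
  show "escapes L J h (e + (J * k + h)) (flipped (insert (g x) (A \<union> g ` Z))) xs"
    using assms(6) by simp
qed (use row_plus Z in blast)

lemma shrink_pair_step:
  assumes n: "1 \<le> n" "n < m" and "e + J + h \<le> 2 * J"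
    and "escapes L J h (e + 2 * h) (flipped (A \<union> g ` shrunk (Suc n))) xs"
  shows "escapes L J h e (flipped (A \<union> g ` shrunk n)) (g (int n - 1, 0, False) # g (int n, 0, True) # xs)"
proof -
  let ?x = "(int n - 1, 0, False)" and ?y = "(int n, 0, True)"
  have sub: "shrunk n \<subseteq> plus_row m" "insert ?x (shrunk n) \<subseteq> plus_row m"
    using n shrunk_subset[of n m] unfolding plus_row_def by auto
  have xy: "?x \<in> plus_row m" "?x \<notin> shrunk n" "?y \<in> plus_row m" "?y \<notin> insert ?x (shrunk n)"
    using n unfolding plus_row_def shrunk_def by auto
  have "(int n - 1, 0, True) \<in> shrunk n" using n unfolding shrunk_def by auto
  then have nbx: "nbr_sum (flipped (A \<union> g ` shrunk n) \<circ> g) ?x \<le> 1"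
    using plus_row_flipped_minus[OF sub(1), of "(int n - 1, 0, True)"]
      flipped_le[of "A \<union> g ` shrunk n" "g (int n - 1, 1, True)"]
      flipped_le[of "A \<union> g ` shrunk n" "g (int n, 0, True)"] by (simp add: nbr_sum_down)
  have nby: "nbr_sum (flipped (A \<union> g ` insert ?x (shrunk n)) \<circ> g) ?y \<le> -1"
    using plus_row_flipped_minus[OF sub(2), of "(int n, -1, False)"] below_minus n
      plus_row_flipped_minus[OF sub(2), of ?x] flipped_le[of "A \<union> g ` insert ?x (shrunk n)" "g (int n, 0, False)"]
    by (simp add: nbr_sum_up)
  have "escapes L J h (e + (J * real_of_int 1 + h)) (flipped (A \<union> g ` insert ?x (shrunk n))) (g ?y # xs)"
    using escapes_mono[OF assms(4)] assms(3) J_ge h_pos shrunk_Suc[of n]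
    by (intro shrink_flip[OF sub(2) xy(3,4) nby]) simp_all
  then show ?thesis
    using assms(3) by (intro shrink_flip[OF sub(1) xy(1,2) nbx]) simp_all
qed

lemma shrink_pairs_escape:
  assumes "1 \<le> n" "n \<le> m" "e' \<le> e + 2 * real n * h" "e + J + (2 * real m - 1) * h \<le> 2 * J"
    and "escapes L J h (e + (2 * real m + 1) * h - J) (flipped (A \<union> g ` plus_row m)) ys"
  shows "escapes L J h e' (flipped (A \<union> g ` shrunk n))
    (map g (shrink_pairs n m) @ g (int m - 1, 0, False) # ys)"
  using assms(2,1,3)
proof (induction n arbitrary: e' rule: inc_induct)
  case base
  let ?x = "(int m - 1, 0, False)"
  have x: "?x \<in> plus_row m" "?x \<notin> shrunk m" using base.prems unfolding plus_row_def shrunk_def by auto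
  have "(int m - 1, 0, True) \<in> shrunk m" using base.prems unfolding shrunk_def by auto
  moreover have "flipped (A \<union> g ` shrunk m) (g (int m, 0, True)) = -1"
    using plus_row_flipped_minus[OF shrunk_subset[OF order_refl]] right_end by blast
  ultimately have nb: "nbr_sum (flipped (A \<union> g ` shrunk m) \<circ> g) ?x \<le> -1"
    using plus_row_flipped_minus[OF shrunk_subset, of m "(int m - 1, 0, True)"]
      flipped_le[of "A \<union> g ` shrunk m" "g (int m - 1, 1, True)"]
    by (simp add: nbr_sum_down)
  have "escapes L J h e' (flipped (A \<union> g ` shrunk m)) (g ?x # ys)"
    using escapes_mono[OF assms(5)] assms(4) base.prems J_ge h_pos plus_row_shrunk[of m]
    by (intro shrink_flip[OF shrunk_subset x nb]) (simp_all add: algebra_simps)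
  then show ?case by (simp add: shrink_pairs_def)
next
  case (step n)
  have "(2 * real n + 1) * h \<le> (2 * real m - 1) * h" using step.hyps h_pos by simp
  then have "e' + J + h \<le> 2 * J" using step.prems assms(4) by (simp add: algebra_simps)
  moreover have "escapes L J h (e' + 2 * h) (flipped (A \<union> g ` shrunk (Suc n)))
      (map g (shrink_pairs (Suc n) m) @ g (int m - 1, 0, False) # ys)"
    using step.prems by (intro step.IH) (simp_all add: algebra_simps)
  ultimately show ?case
    using shrink_pair_step[OF step.prems(1) step.hyps(2)] by (simp add: shrink_pairs_Cons[OF step.hyps(2)])
qed

lemma shrink_run:
  assumes "e \<le> 2 * J" "m \<ge> 1 \<Longrightarrow> e + J + (2 * real m - 1) * h \<le> 2 * J"
    and "escapes L J h (e + (2 * real m + 1) * h - J) (flipped (A \<union> g ` plus_row m)) ys"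
  shows "escapes L J h e (flipped A) (map g (shrink_seq m) @ ys)"
proof (cases "m = 0")
  case True
  let ?x = "(-1, 0, False)"
  have x: "?x \<in> plus_row m" "?x \<notin> {}" and row: "plus_row m = {?x}" using True unfolding plus_row_def by auto
  have "nbr_sum (flipped (A \<union> g ` {}) \<circ> g) ?x \<le> -1"
    using plus_row_flipped_minus[of "{}" "(-1, 0, True)"] plus_row_flipped_minus[of "{}" "(0, 0, True)"]
      left_end right_end True flipped_le[of "A \<union> g ` {}" "g (-1, 1, True)"]
    by (simp add: nbr_sum_down)
  then have "escapes L J h e (flipped (A \<union> g ` {})) (g ?x # ys)"
    using assms(1,3) row True h_pos J_ge by (intro shrink_flip[of "{}", where k = "-1"]) (simp_all add: algebra_simps)
  then show ?thesis using True by (simp add: shrink_seq_def)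
next
  case False
  let ?x = "(0, 0, True)" and ?y = "(-1, 0, False)"
  have xy: "?x \<in> plus_row m" "?x \<notin> {}" "?y \<in> plus_row m" "?y \<notin> {?x}" and sub: "{?x} \<subseteq> plus_row m"
    using False unfolding plus_row_def by auto
  have nbx: "nbr_sum (flipped (A \<union> g ` {}) \<circ> g) ?x \<le> 1"
    using plus_row_flipped_minus[of "{}" "(0, -1, False)"] below_minus False
      flipped_le[of "A \<union> g ` {}" "g (0, 0, False)"] flipped_le[of "A \<union> g ` {}" "g (-1, 0, False)"]
    by (simp add: nbr_sum_up)
  have nby: "nbr_sum (flipped (A \<union> g ` {?x}) \<circ> g) ?y \<le> -1"
    using plus_row_flipped_minus[OF sub, of "(-1, 0, True)"] plus_row_flipped_minus[OF sub, of ?x]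
      left_end flipped_le[of "A \<union> g ` {?x}" "g (-1, 1, True)"]
    by (simp add: nbr_sum_down)
  have "1 * h \<le> (2 * real m - 1) * h" using False h_pos by (intro mult_right_mono) auto
  then have energy: "e + J + h \<le> 2 * J" using assms(2) False by (simp add: algebra_simps)
  have "escapes L J h (e + 2 * h) (flipped (A \<union> g ` shrunk 1)) (map g (shrink_pairs 1 m) @ g (int m - 1, 0, False) # ys)"
    using assms False by (intro shrink_pairs_escape) simp_all
  then have "escapes L J h (e + (J * real_of_int 1 + h)) (flipped (A \<union> g ` {?x}))
      (g ?y # map g (shrink_pairs 1 m) @ g (int m - 1, 0, False) # ys)"
    using energy J_ge h_pos shrunk_1 escapes_mono by (intro shrink_flip[OF sub xy(3,4) nby]) (simp_all add: insert_commute)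
  then have "escapes L J h e (flipped (A \<union> g ` {})) (g ?x # g ?y # map g (shrink_pairs 1 m) @ g (int m - 1, 0, False) # ys)"
    using energy by (intro shrink_flip[OF _ xy(1,2) nbx]) simp_all
  then show ?thesis using False by (simp add: shrink_seq_def)
qed

end

context
  fixes g :: "face \<Rightarrow> face" and A :: "face set" and j :: nat
  assumes g: "torus_aut L g" and box: "int j + 2 \<le> int L" and j1: "j \<ge> 1"
    and A_minus: "\<forall>a\<in>A. s a = -1"
    and A_apart: "\<forall>a\<in>A. \<forall>x\<in>grown j. proj L a \<noteq> proj L (g x)"
    and row_minus: "\<forall>x\<in>grown j. s (g x) = -1"
    and above_plus: "\<forall>k::int. 0 \<le> k \<and> k < int j \<longrightarrow> s (g (k, 0, True)) = 1 \<or> g (k, 0, True) \<in> A"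
begin

lemma grown_flipped_plus:
  assumes "Z \<subseteq> grown j" "s (g y) = 1 \<or> g y \<in> A \<or> y \<in> Z"
  shows "flipped (A \<union> g ` Z) (g y) = 1"
  using assms A_minus row_minus by (intro flipped_plus) auto

lemma grow_flip:
  assumes Z: "Z \<subseteq> grown j" "x \<in> grown j" "x \<notin> Z"
    and "nbr_sum (flipped (A \<union> g ` Z) \<circ> g) x \<ge> k" "e + (- J * k - h) \<le> 2 * J"
    and "escapes L J h (e + (- J * k - h)) (flipped (A \<union> g ` insert x Z)) xs"
  shows "escapes L J h e (flipped (A \<union> g ` Z)) (g x # xs)"
proof (rule escapes_flip_minus[OF g _ _ assms(4,5)])
  show "\<forall>b\<in>A \<union> g ` Z. proj L b \<noteq> proj L (g x)"
  proof (rule proj_apart_Un[OF g])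
    fix z assume "z \<in> Z"
    then have "z \<in> grown j" "z \<noteq> x" using Z by auto
    then show "z \<noteq> x \<and> \<bar>fst z - fst x\<bar> < int L \<and> \<bar>fst (snd z) - fst (snd x)\<bar> < int L"
      using grown_bounds[of z j] grown_bounds[of x j] Z(2) box by auto
  qed (use A_apart Z in blast)
  show "escapes L J h (e + (- J * k - h)) (flipped (insert (g x) (A \<union> g ` Z))) xs"
    using assms(6) by simp
qed (use row_minus Z in blast)

lemma above_flipped_plus:
  assumes "Z \<subseteq> grown j" "0 \<le> k" "k < int j"
  shows "flipped (A \<union> g ` Z) (g (k, 0, True)) = 1"
proof -
  have "s (g (k, 0, True)) = 1 \<or> g (k, 0, True) \<in> A" using above_plus assms(2,3) by simp
  then show ?thesis using grown_flipped_plus[OF assms(1)] by blast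
qed

lemma grow_pair_step:
  assumes n: "1 \<le> n" "n < j" and "e \<le> J + h"
    and "escapes L J h (e - 2 * h) (flipped (A \<union> g ` grown (Suc n))) xs"
  shows "escapes L J h e (flipped (A \<union> g ` grown n)) (g (int n, -1, True) # g (int n, -1, False) # xs)"
proof -
  let ?x = "(int n, -1, True)" and ?y = "(int n, -1, False)"
  have sub: "grown n \<subseteq> grown j" "insert ?x (grown n) \<subseteq> grown j"
    using n grown_subset[of n j] unfolding grown_def by auto
  have xy: "?x \<in> grown j" "?x \<notin> grown n" "?y \<in> grown j" "?y \<notin> insert ?x (grown n)"
    using n unfolding grown_def by auto
  have "(int n - 1, -1, False) \<in> grown n" using n unfolding grown_def by auto
  then have nbx: "nbr_sum (flipped (A \<union> g ` grown n) \<circ> g) ?x \<ge> -1"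
    using grown_flipped_plus[OF sub(1), of "(int n - 1, -1, False)"]
      flipped_ge[of "A \<union> g ` grown n" "g (int n, -1, False)"]
      flipped_ge[of "A \<union> g ` grown n" "g (int n, -2, False)"] by (simp add: nbr_sum_up)
  have nby: "nbr_sum (flipped (A \<union> g ` insert ?x (grown n)) \<circ> g) ?y \<ge> 1"
    using grown_flipped_plus[OF sub(2), of ?x] above_flipped_plus[OF sub(2), of "int n"] n
      flipped_ge[of "A \<union> g ` insert ?x (grown n)" "g (int n + 1, -1, True)"]
    by (simp add: nbr_sum_down)
  have "escapes L J h (e + (- J * real_of_int (-1) - h)) (flipped (A \<union> g ` insert ?x (grown n))) (g ?y # xs)"
    using escapes_mono[OF assms(4)] assms(3) J_ge h_pos grown_Suc[of n] n
    by (intro grow_flip[OF sub(2) xy(3,4) nby]) simp_all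
  then show ?thesis
    using assms(3) by (intro grow_flip[OF sub(1) xy(1,2) nbx]) simp_all
qed

lemma grow_pairs_escape:
  assumes "1 \<le> n" "n \<le> j" "e' \<le> e + J + h - 2 * real n * h" "e \<le> 2 * h"
    and "escapes L J h (e + J - (2 * real j - 1) * h) (flipped (A \<union> g ` grown j)) ys"
  shows "escapes L J h e' (flipped (A \<union> g ` grown n)) (map g (grow_pairs n j) @ ys)"
  using assms(2,1,3)
proof (induction n arbitrary: e' rule: inc_induct)
  case base
  then show ?case using escapes_mono[OF assms(5)] by (simp add: grow_pairs_def algebra_simps)
next
  case (step n)
  have "1 * h \<le> real n * h" using step.prems h_pos by (intro mult_right_mono) auto
  then have "e' \<le> J + h" using step.prems assms(4) by (simp add: algebra_simps)
  moreover have "escapes L J h (e' - 2 * h) (flipped (A \<union> g ` grown (Suc n))) (map g (grow_pairs (Suc n) j) @ ys)"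
    using step.prems by (intro step.IH) (simp_all add: algebra_simps)
  ultimately show ?case
    using grow_pair_step[OF step.prems(1) step.hyps(2)] by (simp add: grow_pairs_Cons[OF step.hyps(2)])
qed

lemma grow_run:
  assumes "e \<le> 2 * h"
    and "escapes L J h (e + J - (2 * real j - 1) * h) (flipped (A \<union> g ` grown j)) ys"
  shows "escapes L J h e (flipped A) (map g (grow_seq j) @ ys)"
proof -
  let ?x = "(0, -1, False)"
  have x: "?x \<in> grown j" "?x \<notin> {}" using j1 unfolding grown_def by auto
  have "nbr_sum (flipped (A \<union> g ` {}) \<circ> g) ?x \<ge> -1"
    using above_flipped_plus[of "{}" 0] j1 flipped_ge[of "A \<union> g ` {}" "g (0, -1, True)"]
      flipped_ge[of "A \<union> g ` {}" "g (1, -1, True)"]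
    by (simp add: nbr_sum_down)
  moreover have "escapes L J h (e + J - h) (flipped (A \<union> g ` grown 1)) (map g (grow_pairs 1 j) @ ys)"
    using grow_pairs_escape[OF _ j1 _ assms] by simp
  ultimately have "escapes L J h e (flipped (A \<union> g ` {})) (g ?x # map g (grow_pairs 1 j) @ ys)"
    using assms(1) J_ge h_pos grown_1 by (intro grow_flip[OF _ x, where k = "-1"]) (simp_all add: algebra_simps)
  then show ?thesis by (simp add: grow_seq_def)
qed

end

end

section \<open>Sides of the plus region\<close>

text \<open>A lattice symmetry \<open>g\<close> serves as a frame of reference: \<open>g (0, 0, True)\<close> and
  \<open>g (0, -1, False)\<close> are the plus and the minus face at a boundary edge, and the faces
  \<open>g (k, 0, True)\<close> follow the boundary.  \<open>l\<close> is the critical side length.\<close>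

locale stable_field = periodic_field +
  fixes l :: nat
  assumes l1: "l \<ge> 1" and l_lower: "(2 * real l - 1) * h < J" and l_upper: "J < (2 * real l + 1) * h"
    and l_box: "2 * int l + 4 \<le> int L" and stable: "locally_stable s"
begin

definition escapable :: bool where
  "escapable \<longleftrightarrow> (\<exists>xs. escapes L J h 0 s xs)"

definition on_boundary :: "(face \<Rightarrow> face) \<Rightarrow> bool" where
  "on_boundary g \<longleftrightarrow> s (g (0, 0, True)) = 1 \<and> s (g (0, -1, False)) = -1"

definition at_corner :: "(face \<Rightarrow> face) \<Rightarrow> bool" where
  "at_corner g \<longleftrightarrow> on_boundary g \<and> s (g (-1, 0, True)) = -1 \<and> s (g (-1, 0, False)) = 1"

definition critical_side :: "(face \<Rightarrow> face) \<Rightarrow> bool" where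
  "critical_side g \<longleftrightarrow>
     (\<forall>k::int. 1 \<le> k \<and> k < int l \<longrightarrow> s (g (k, 0, True)) = 1) \<and> s (g (int l, 0, True)) = -1"

text \<open>\<open>g \<circ> turn\<close> is the frame at the far end of a side of length \<open>l\<close>, turned by 60 degrees onto
  the next side.\<close>

definition turn :: "face \<Rightarrow> face" where
  "turn x = shift (int l) 0 (rot x)"

lemma turn_simps:
  "turn (u, v, True) = (int l - v - 1, u + v, False)"
  "turn (u, v, False) = (int l - v - 1, u + v + 1, True)"
  unfolding turn_def by simp_all

lemma l_fits: "int l + 3 \<le> int L"
  using l_box l1 by linarith

lemma frame_walk:
  assumes "torus_aut L g" "on_boundary g" "\<forall>k::int. 1 \<le> k \<and> k \<le> n \<longrightarrow> s (g (k, 0, True)) = 1"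
    and "0 \<le> k" "k \<le> n"
  shows "s (g (k, 0, True)) = 1" "s (g (k, -1, False)) = -1"
  using boundary_walk[OF pm_field_comp[OF pm] locally_stable_comp[OF stable assms(1)], of n k] assms(2-)
  by (auto simp: on_boundary_def)

lemma frame_step:
  assumes "torus_aut L g" "s (g (k, 0, True)) = 1" "s (g (k, -1, False)) = -1"
  shows "s (g (k, -1, True)) = -1" "s (g (k + 1, -1, True)) = -1" "s (g (k + 1, -1, False)) = -1"
    "s (g (k + 1, -2, False)) = -1" "s (g (k, 0, False)) = 1" "s (g (k - 1, 0, False)) = 1"
  using boundary_step_shift[OF pm_field_comp[OF pm] locally_stable_comp[OF stable assms(1)], of k] assms(2,3)
  by auto

lemma escapable_of_long_side:
  assumes g: "torus_aut L g" and "on_boundary g"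
    and side: "\<forall>k::int. 1 \<le> k \<and> k \<le> int l \<longrightarrow> s (g (k, 0, True)) = 1"
  shows escapable
proof -
  have W: "s (g (k, 0, True)) = 1" "s (g (k, -1, False)) = -1" if "0 \<le> k" "k \<le> int l" for k
    using frame_walk[OF g assms(2) side that] by auto
  have "escapes L J h 0 (flipped {}) (map g (grow_seq (l + 1)) @ [])"
  proof (rule grow_run[OF g])
    show "int (l + 1) + 2 \<le> int L" using l_fits by simp
    show "\<forall>x\<in>grown (l + 1). s (g x) = -1"
      unfolding grown_def using W frame_step(1)[OF g W] by auto
    show "\<forall>k::int. 0 \<le> k \<and> k < int (l + 1) \<longrightarrow> s (g (k, 0, True)) = 1 \<or> g (k, 0, True) \<in> {}"
      using W by auto
    show "escapes L J h (0 + J - (2 * real (l + 1) - 1) * h) (flipped ({} \<union> g ` grown (l + 1))) []"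
      using l_upper by (simp add: algebra_simps)
  qed (use h_pos in auto)
  then show ?thesis unfolding escapable_def flipped_empty by auto
qed

lemma escapable_of_short_side:
  assumes g: "torus_aut L g" and c: "at_corner g" and m: "1 \<le> m" "m + 1 \<le> l"
    and side: "\<forall>k::int. 1 \<le> k \<and> k < int m \<longrightarrow> s (g (k, 0, True)) = 1"
    and end_minus: "s (g (int m, 0, True)) = -1"
  shows escapable
proof -
  have "on_boundary g" using c unfolding at_corner_def by simp
  then have W: "s (g (k, 0, True)) = 1" "s (g (k, -1, False)) = -1" if "0 \<le> k" "k < int m" for k
    using frame_walk[OF g _ _ that(1), of "int m - 1"] side that by auto
  have hm: "(2 * real m + 1) * h \<le> (2 * real l - 1) * h" using m h_pos by (intro mult_right_mono) auto
  have "escapes L J h 0 (flipped {}) (map g (shrink_seq m) @ [])"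
  proof (rule shrink_run[OF g])
    show "int m + 2 \<le> int L" using l_fits m by simp
    have "s (g (i, 0, False)) = 1" if "-1 \<le> i" "i < int m" for i
      using that frame_step(5)[OF g W] c by (cases "i = -1") (auto simp: at_corner_def)
    then show "\<forall>x\<in>plus_row m. s (g x) = 1" unfolding plus_row_def using W by auto
    show "\<forall>k::int. 0 \<le> k \<and> k < int m \<longrightarrow> s (g (k, -1, False)) = -1" using W by auto
    show "s (g (-1, 0, True)) = -1 \<or> g (-1, 0, True) \<in> {}" using c unfolding at_corner_def by simp
    show "m \<ge> 1 \<Longrightarrow> 0 + J + (2 * real m - 1) * h \<le> 2 * J" using hm l_lower h_pos by (simp add: algebra_simps)
    show "escapes L J h (0 + (2 * real m + 1) * h - J) (flipped ({} \<union> g ` plus_row m)) []"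
      using hm l_lower by simp
  qed (use end_minus J_pos in auto)
  then show ?thesis unfolding escapable_def flipped_empty by auto
qed

lemma boundary_side_cases:
  assumes g: "torus_aut L g" and b: "on_boundary g"
  obtains escapable
  | m where "1 \<le> m" "m \<le> l" "\<forall>k::int. 1 \<le> k \<and> k < int m \<longrightarrow> s (g (k, 0, True)) = 1"
      "s (g (int m, 0, True)) = -1"
proof (cases "\<forall>k::int. 1 \<le> k \<and> k \<le> int l \<longrightarrow> s (g (k, 0, True)) = 1")
  case True
  then show ?thesis using escapable_of_long_side[OF g b] that(1) by blast
next
  case False
  define P where "P n \<longleftrightarrow> 1 \<le> n \<and> n \<le> l \<and> s (g (int n, 0, True)) \<noteq> 1" for n
  obtain k :: int where "1 \<le> k" "k \<le> int l" "s (g (k, 0, True)) \<noteq> 1" using False by blast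
  then have "P (nat k)" unfolding P_def by auto
  then obtain m where m: "P m" "\<forall>n<m. \<not> P n" using exists_least_iff[of P] by blast
  have "\<forall>k::int. 1 \<le> k \<and> k < int m \<longrightarrow> s (g (k, 0, True)) = 1"
  proof (intro allI impI)
    fix k :: int assume k: "1 \<le> k \<and> k < int m"
    then have "\<not> P (nat k)" using m(2) by auto
    then show "s (g (k, 0, True)) = 1" using k m(1) unfolding P_def by auto
  qed
  then show ?thesis using m(1) s_cases[of "g (int m, 0, True)"] that(2) unfolding P_def by auto
qed

lemma corner_frame:
  assumes g: "torus_aut L g" and b: "on_boundary g" and m: "1 \<le> m"
    and side: "\<forall>k::int. 1 \<le> k \<and> k < int m \<longrightarrow> s (g (k, 0, True)) = 1"
    and end_minus: "s (g (int m, 0, True)) = -1"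
  shows "torus_aut L (g \<circ> shift (int m) 0 \<circ> rot)" "at_corner (g \<circ> shift (int m) 0 \<circ> rot)"
proof -
  show "torus_aut L (g \<circ> shift (int m) 0 \<circ> rot)"
    by (intro torus_aut_comp g torus_aut_shift torus_aut_rot L1)
  have W: "s (g (int m - 1, 0, True)) = 1" "s (g (int m - 1, -1, False)) = -1"
    using frame_walk[OF g b _ _ order_refl, of "int m - 1"] side m by auto
  then show "at_corner (g \<circ> shift (int m) 0 \<circ> rot)"
    using frame_step(5)[OF g W] end_minus unfolding at_corner_def on_boundary_def by (simp add: algebra_simps)
qed

lemma corner_side_cases:
  assumes g: "torus_aut L g" and c: "at_corner g"
  shows "escapable \<or> critical_side g"
proof -
  have b: "on_boundary g" using c unfolding at_corner_def by simp
  show ?thesis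
  proof (cases rule: boundary_side_cases[OF g b])
    case (2 m)
    then show ?thesis
      using escapable_of_short_side[OF g c] unfolding critical_side_def by (cases "m = l") auto
  qed simp
qed

lemma critical_side_turn:
  assumes g: "torus_aut L g" and c: "at_corner g" and cr: "critical_side g"
  shows "torus_aut L (g \<circ> turn)" "at_corner (g \<circ> turn)"
proof -
  have "g \<circ> turn = g \<circ> shift (int l) 0 \<circ> rot" by (simp add: fun_eq_iff turn_def)
  moreover have "on_boundary g" using c unfolding at_corner_def by simp
  ultimately show "torus_aut L (g \<circ> turn)" "at_corner (g \<circ> turn)"
    using corner_frame[OF g _ l1] cr unfolding critical_side_def by auto
qed

lemma critical_side_facts:
  assumes g: "torus_aut L g" and c: "at_corner g" and cr: "critical_side g"
    and k: "0 \<le> k" "k < int l"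
  shows "s (g (k, 0, True)) = 1" "s (g (k, -1, False)) = -1" "s (g (k, -1, True)) = -1"
    "s (g (k + 1, -1, True)) = -1" "s (g (k, 0, False)) = 1"
proof -
  have b: "on_boundary g" using c unfolding at_corner_def by simp
  have "\<forall>k::int. 1 \<le> k \<and> k \<le> int l - 1 \<longrightarrow> s (g (k, 0, True)) = 1"
    using cr unfolding critical_side_def by auto
  then have W: "s (g (k, 0, True)) = 1" "s (g (k, -1, False)) = -1"
    using frame_walk[OF g b, where n = "int l - 1", OF _ k(1)] k(2) by auto
  then show "s (g (k, 0, True)) = 1" "s (g (k, -1, False)) = -1" .
  show "s (g (k, -1, True)) = -1" "s (g (k + 1, -1, True)) = -1" "s (g (k, 0, False)) = 1"
    using frame_step[OF g W] by auto
qed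

lemma plus_row_critical:
  assumes g: "torus_aut L g" and c: "at_corner g" and cr: "critical_side g" and m: "m \<le> l"
  shows "\<forall>x\<in>plus_row m. s (g x) = 1"
proof -
  have "s (g (i, 0, False)) = 1" if "-1 \<le> i" "i < int m" for i
    using that m critical_side_facts(5)[OF g c cr, of i] c by (cases "i = -1") (auto simp: at_corner_def)
  then show ?thesis unfolding plus_row_def using critical_side_facts(1)[OF g c cr] m by auto
qed

lemma grown_critical:
  assumes g: "torus_aut L g" and c: "at_corner g" and cr: "critical_side g"
  shows "\<forall>x\<in>grown l. s (g x) = -1"
  unfolding grown_def using critical_side_facts(2,3)[OF g c cr] by auto

lemma turn_plus_row:
  "z \<in> plus_row l \<Longrightarrow> fst (turn z) = int l - 1 \<and> 0 \<le> fst (snd (turn z)) \<and> fst (snd (turn z)) \<le> int l"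
  unfolding plus_row_def by (auto simp: turn_simps)

lemma turn_turn_plus_row:
  assumes "x \<in> plus_row (l - 1)"
  shows "-1 \<le> fst (turn (turn (shift 1 0 x))) \<and> fst (turn (turn (shift 1 0 x))) \<le> int l - 2
    \<and> int l \<le> fst (snd (turn (turn (shift 1 0 x)))) \<and> fst (snd (turn (turn (shift 1 0 x)))) \<le> 2 * int l - 1"
  using assms l1 unfolding plus_row_def by (auto simp: turn_simps)

text \<open>Three consecutive sides of critical length.  If \<open>J < 2lh\<close>, rows are grown along the second
  and the third side (energy \<open>J - (2l - 1)h\<close>, then \<open>2J - 4lh < 0\<close>); otherwise the second side is
  eroded and then the first and the third, each shortened by one.\<close>

context
  fixes g :: "face \<Rightarrow> face"
  assumes g: "torus_aut L g" and c: "at_corner g" and cr0: "critical_side g"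
    and cr1: "critical_side (g \<circ> turn)" and cr2: "critical_side (g \<circ> turn \<circ> turn)"
begin

lemma turned_frames:
  "torus_aut L (g \<circ> turn)" "at_corner (g \<circ> turn)"
  "torus_aut L (g \<circ> turn \<circ> turn)" "at_corner (g \<circ> turn \<circ> turn)"
  using critical_side_turn[OF g c cr0] critical_side_turn[of "g \<circ> turn"] cr1 by auto

lemma grow_third_side:
  assumes "e \<le> 2 * h"
    and "escapes L J h (e + J - (2 * real (l + 1) - 1) * h)
      (flipped ((g \<circ> turn) ` grown l \<union> (g \<circ> turn \<circ> turn \<circ> shift (-1) 0) ` grown (l + 1))) ys"
  shows "escapes L J h e (flipped ((g \<circ> turn) ` grown l)) (map (g \<circ> turn \<circ> turn \<circ> shift (-1) 0) (grow_seq (l + 1)) @ ys)"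
proof -
  let ?gC = "g \<circ> turn" and ?gD = "g \<circ> turn \<circ> turn \<circ> shift (-1) 0"
  let ?A = "?gC ` grown l"
  have gD: "torus_aut L ?gD" using turned_frames(3) torus_aut_comp torus_aut_shift L1 by blast
  note CF = critical_side_facts[OF turned_frames(1,2) cr1]
  note DF = critical_side_facts[OF turned_frames(3,4) cr2]
  show ?thesis
  proof (rule grow_run[OF gD _ _ _ _ _ _ assms])
    show "int (l + 1) + 2 \<le> int L" using l_fits by simp
    show "\<forall>a\<in>?A. s a = -1" using grown_critical[OF turned_frames(1,2) cr1] by blast
    show "\<forall>a\<in>?A. \<forall>x\<in>grown (l + 1). proj L a \<noteq> proj L (?gD x)"
    proof (intro ballI)
      fix a x assume a: "a \<in> ?A" and "x \<in> grown (l + 1)"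
      then obtain u t where x: "x = (u, -1, t)" "0 \<le> u" "u \<le> int l"
        using grown_bounds[of x "l + 1"] by (cases x) auto
      obtain z where z: "z \<in> grown l" "a = ?gC z" using a by blast
      have "fst (turn (u - 1, -1, t)) = int l" "-2 \<le> fst (snd (turn (u - 1, -1, t)))"
        "fst (snd (turn (u - 1, -1, t))) \<le> int l - 1"
        using x by (cases t; simp add: turn_simps)+
      then have "proj L (?gC z) \<noteq> proj L (?gC (turn (u - 1, -1, t)))"
        using grown_bounds[OF z(1)] l_fits by (intro torus_aut_proj_neq[OF L1 turned_frames(1)]) auto
      then show "proj L a \<noteq> proj L (?gD x)" using z x by simp
    qed
    have "s (?gD (k, -1, False)) = -1" if "0 \<le> k" "k \<le> int l" for k
    proof (cases "k = 0")
      case True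
      have "?gD (0, -1, False) = ?gC (int l - 1 + 1, -1, True)" by (simp add: turn_simps)
      then show ?thesis using True CF(4)[of "int l - 1"] l1 by simp
    qed (use that DF(2)[of "k - 1"] in simp)
    moreover have "s (?gD (k, -1, True)) = -1" if "1 \<le> k" "k \<le> int l" for k
      using that DF(3)[of "k - 1"] by simp
    ultimately show "\<forall>x\<in>grown (l + 1). s (?gD x) = -1" unfolding grown_def by auto
    have "?gD (0, 0, True) = ?gC (int l - 1, -1, False)" by (simp add: turn_simps)
    moreover have "(int l - 1, -1, False) \<in> grown l" using l1 unfolding grown_def by auto
    ultimately have "?gD (0, 0, True) \<in> ?A" by (metis imageI)
    moreover have "s (?gD (k, 0, True)) = 1" if "1 \<le> k" "k \<le> int l" for k
      using that DF(1)[of "k - 1"] by simp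
    moreover have "k = 0 \<or> 1 \<le> k \<and> k \<le> int l" if "0 \<le> k \<and> k < int (l + 1)" for k :: int
      using that by linarith
    ultimately show "\<forall>k::int. 0 \<le> k \<and> k < int (l + 1) \<longrightarrow> s (?gD (k, 0, True)) = 1 \<or> ?gD (k, 0, True) \<in> ?A"
      by blast
  qed simp
qed

lemma escapable_by_growing:
  assumes "J < 2 * real l * h"
  shows escapable
proof -
  let ?gC = "g \<circ> turn"
  have "escapes L J h (J - (2 * real l - 1) * h) (flipped (?gC ` grown l))
      (map (g \<circ> turn \<circ> turn \<circ> shift (-1) 0) (grow_seq (l + 1)) @ [])"
    using assms l_upper by (intro grow_third_side) (simp_all add: algebra_simps)
  then have "escapes L J h 0 (flipped {}) (map ?gC (grow_seq l) @ map (g \<circ> turn \<circ> turn \<circ> shift (-1) 0) (grow_seq (l + 1)) @ [])"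
  proof (intro grow_run[OF turned_frames(1) _ l1 _ _ grown_critical[OF turned_frames(1,2) cr1]])
    show "int l + 2 \<le> int L" using l_fits by simp
    show "\<forall>k::int. 0 \<le> k \<and> k < int l \<longrightarrow> s (?gC (k, 0, True)) = 1 \<or> ?gC (k, 0, True) \<in> {}"
      using critical_side_facts(1)[OF turned_frames(1,2) cr1] by simp
  qed (use h_pos in simp_all)
  then show ?thesis unfolding escapable_def flipped_empty by auto
qed

lemma shrink_third_side:
  assumes "2 * real l * h \<le> J"
  shows "escapes L J h (4 * real l * h - 2 * J) (flipped ((g \<circ> turn) ` plus_row l \<union> g ` plus_row (l - 1)))
    (map (g \<circ> turn \<circ> turn \<circ> shift 1 0) (shrink_seq (l - 1)) @ [])"
proof -
  let ?gC = "g \<circ> turn" and ?gD = "g \<circ> turn \<circ> turn \<circ> shift 1 0" and ?m = "l - 1"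
  let ?A = "?gC ` plus_row l \<union> g ` plus_row ?m"
  have gD: "torus_aut L ?gD" using turned_frames(3) torus_aut_comp torus_aut_shift L1 by blast
  have m: "int ?m = int l - 1" "real ?m = real l - 1" "?m \<le> l" using l1 by auto
  note DF = critical_side_facts[OF turned_frames(3,4) cr2]
  have A_plus: "\<forall>a\<in>?A. s a = 1"
    using plus_row_critical[OF turned_frames(1,2) cr1 order_refl] plus_row_critical[OF g c cr0 m(3)] by auto
  show ?thesis
  proof (rule shrink_run[OF gD _ A_plus])
    show "int ?m + 2 \<le> int L" using l_fits m by simp
    show "\<forall>a\<in>?A. \<forall>x\<in>plus_row ?m. proj L a \<noteq> proj L (?gD x)"
    proof (intro ballI)
      fix a x assume a: "a \<in> ?A" and x: "x \<in> plus_row ?m"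
      consider z where "z \<in> plus_row l" "a = g (turn z)" | z where "z \<in> plus_row ?m" "a = g z"
        using a by auto
      then show "proj L a \<noteq> proj L (?gD x)"
      proof cases
        case 1
        have "proj L (g (turn z)) \<noteq> proj L (g (turn (turn (shift 1 0 x))))"
          using turn_plus_row[OF 1(1)] turn_turn_plus_row[OF x] l_box
          by (intro torus_aut_proj_neq[OF L1 g]) auto
        then show ?thesis using 1(2) by simp
      next
        case 2
        have "proj L (g z) \<noteq> proj L (g (turn (turn (shift 1 0 x))))"
          using plus_row_bounds[OF 2(1)] turn_turn_plus_row[OF x] l_box m
          by (intro torus_aut_proj_neq[OF L1 g]) auto
        then show ?thesis using 2(2) by simp
      qed
    qed
    show "\<forall>x\<in>plus_row ?m. s (?gD x) = 1"
      unfolding plus_row_def using DF(1,5) m by auto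
    show "\<forall>k::int. 0 \<le> k \<and> k < int ?m \<longrightarrow> s (?gD (k, -1, False)) = -1"
      using DF(2) m by simp
    have "?gD (-1, 0, True) = ?gC (int l - 1, 0, False)" by (simp add: turn_simps)
    moreover have "(int l - 1, 0, False) \<in> plus_row l" unfolding plus_row_def by auto
    ultimately show "s (?gD (-1, 0, True)) = -1 \<or> ?gD (-1, 0, True) \<in> ?A" by (metis UnI1 imageI)
    show "s (?gD (int ?m, 0, True)) = -1 \<or> ?gD (int ?m, 0, True) \<in> ?A"
      using cr2 m unfolding critical_side_def by simp
  qed (use assms m h_pos J_pos in \<open>simp_all add: algebra_simps\<close>)
qed

lemma escapable_by_shrinking:
  assumes "2 * real l * h \<le> J"
  shows escapable
proof -
  let ?gC = "g \<circ> turn" and ?m = "l - 1"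
  let ?A = "?gC ` plus_row l"
  have m: "int ?m = int l - 1" "real ?m = real l - 1" "?m \<le> l" using l1 by auto
  have A_plus: "\<forall>a\<in>?A. s a = 1" using plus_row_critical[OF turned_frames(1,2) cr1 order_refl] by auto
  have "escapes L J h ((2 * real l + 1) * h - J) (flipped ?A)
      (map g (shrink_seq ?m) @ map (g \<circ> turn \<circ> turn \<circ> shift 1 0) (shrink_seq ?m) @ [])"
  proof (intro shrink_run[OF g _ A_plus _ plus_row_critical[OF g c cr0 m(3)]])
    show "int ?m + 2 \<le> int L" using l_fits m by simp
    show "\<forall>a\<in>?A. \<forall>x\<in>plus_row ?m. proj L a \<noteq> proj L (g x)"
    proof (intro ballI)
      fix a x assume a: "a \<in> ?A" and x: "x \<in> plus_row ?m"
      then obtain z where z: "z \<in> plus_row l" "a = g (turn z)" by auto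
      have "proj L (g (turn z)) \<noteq> proj L (g x)"
        using turn_plus_row[OF z(1)] plus_row_bounds[OF x] m l_fits by (intro torus_aut_proj_neq[OF L1 g]) auto
      then show "proj L a \<noteq> proj L (g x)" using z(2) by simp
    qed
    show "\<forall>k::int. 0 \<le> k \<and> k < int ?m \<longrightarrow> s (g (k, -1, False)) = -1"
      using critical_side_facts(2)[OF g c cr0] m by simp
    show "s (g (-1, 0, True)) = -1 \<or> g (-1, 0, True) \<in> ?A" using c unfolding at_corner_def by simp
    have "g (int ?m, 0, True) = ?gC (-1, 0, False)" using m by (simp add: turn_simps)
    moreover have "(-1, 0, False) \<in> plus_row l" unfolding plus_row_def by auto
    ultimately show "s (g (int ?m, 0, True)) = -1 \<or> g (int ?m, 0, True) \<in> ?A" by (metis imageI)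
    show "escapes L J h ((2 * real l + 1) * h - J + (2 * real ?m + 1) * h - J)
        (flipped (?A \<union> g ` plus_row ?m)) (map (g \<circ> turn \<circ> turn \<circ> shift 1 0) (shrink_seq ?m) @ [])"
      using shrink_third_side[OF assms] m by (simp add: algebra_simps)
  qed (use l_lower m J_ge h_pos in \<open>simp_all add: algebra_simps\<close>)
  then have "escapes L J h 0 (flipped {}) (map ?gC (shrink_seq l) @ map g (shrink_seq ?m) @
      map (g \<circ> turn \<circ> turn \<circ> shift 1 0) (shrink_seq ?m) @ [])"
  proof (intro shrink_run[OF turned_frames(1) _ _ _ plus_row_critical[OF turned_frames(1,2) cr1 order_refl]])
    show "int l + 2 \<le> int L" using l_fits by simp
    show "\<forall>k::int. 0 \<le> k \<and> k < int l \<longrightarrow> s (?gC (k, -1, False)) = -1"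
      using critical_side_facts(2)[OF turned_frames(1,2) cr1] by simp
    show "s (?gC (-1, 0, True)) = -1 \<or> ?gC (-1, 0, True) \<in> {}"
      using turned_frames(2) unfolding at_corner_def by simp
    show "s (?gC (int l, 0, True)) = -1 \<or> ?gC (int l, 0, True) \<in> {}"
      using cr1 unfolding critical_side_def by simp
  qed (use l_lower J_pos in \<open>simp_all add: algebra_simps\<close>)
  then show ?thesis unfolding escapable_def flipped_empty by auto
qed

end

lemma escapable_of_boundary:
  assumes g: "torus_aut L g" and b: "on_boundary g"
  shows escapable
proof (cases rule: boundary_side_cases[OF g b])
  case (2 m)
  let ?g1 = "g \<circ> shift (int m) 0 \<circ> rot"
  have g1: "torus_aut L ?g1" "at_corner ?g1" using corner_frame[OF g b 2(1,3,4)] by blast+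
  show ?thesis
  proof (cases "critical_side ?g1")
    case cr1: True
    note g2 = critical_side_turn[OF g1 cr1]
    show ?thesis
    proof (cases "critical_side (?g1 \<circ> turn)")
      case cr2: True
      note g3 = critical_side_turn[OF g2 cr2]
      show ?thesis
      proof (cases "critical_side (?g1 \<circ> turn \<circ> turn)")
        case cr3: True
        show ?thesis
          using escapable_by_growing[OF g1 cr1 cr2 cr3] escapable_by_shrinking[OF g1 cr1 cr2 cr3] by linarith
      qed (use corner_side_cases[OF g3] in blast)
    qed (use corner_side_cases[OF g2] in blast)
  qed (use corner_side_cases[OF g1] in blast)
qed

end

lemma card_Lam: "card (Lam L) = 2 * L * L"
  unfolding Lam_def by (simp add: card_cartesian_product)

lemma critical_length_exists:
  fixes J h :: real
  assumes "0 < h" "2 * h \<le> J" "J / (2 * h) - 1 / 2 \<notin> \<int>"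
  obtains l :: nat where "l \<ge> 1" "(2 * real l - 1) * h < J" "J < (2 * real l + 1) * h"
proof -
  define a where "a = J / (2 * h)"
  have a: "a \<ge> 1" "J = 2 * a * h" unfolding a_def using assms(1,2) by (simp_all add: field_simps)
  define c where "c = \<lceil>a - 1 / 2\<rceil>"
  have "a - 1 / 2 \<noteq> of_int c" using assms(3) unfolding a_def by (metis Ints_of_int)
  then have c: "of_int c - 1 < a - 1 / 2" "a - 1 / 2 < of_int c" unfolding c_def by linarith+
  then have "c \<ge> 1" using a(1) by linarith
  then have l: "real (nat c) = of_int c" "nat c \<ge> 1" by simp_all
  have "(2 * real (nat c) - 1) * h < 2 * a * h" "2 * a * h < (2 * real (nat c) + 1) * h"
    using c l(1) assms(1) by (intro mult_strict_right_mono; linarith)+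
  then show ?thesis using that l(2) a(2) by simp
qed

lemma critical_length_fits:
  fixes J h :: real and L l :: nat
  assumes "0 < h" "2 * h \<le> J" "(2 * real l - 1) * h < J" "l \<ge> 1"
    and "real (2 * L * L) \<ge> (4 * J / h) ^ 2"
  shows "2 * int l + 4 \<le> int L"
proof -
  define a where "a = J / (2 * h)"
  have a: "a \<ge> 1" "J = 2 * a * h" unfolding a_def using assms(1,2) by (simp_all add: field_simps)
  then have "4 * J / h = 8 * a" using assms(1) by simp
  then have LL: "32 * (a * a) \<le> real L * real L" using assms(5) by (simp add: power2_eq_square algebra_simps)
  have la: "2 * real l - 1 < 2 * a" using assms(3) a(2) assms(1) by (simp add: mult.commute)
  have "(2 * a + 5) * (2 * a + 5) \<le> real L * real L \<or> l = 1 \<and> 32 \<le> real L * real L"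
  proof (cases "l = 1")
    case True
    have "1 * 1 \<le> a * a" using a(1) by (intro mult_mono) auto
    then show ?thesis using True LL by linarith
  next
    case False
    then have "a > 3 / 2" using la assms(4) by linarith
    define q where "q = (a - 3 / 2)\<^sup>2"
    have "32 * (a * a) - (2 * a + 5) * (2 * a + 5) = 28 * q + 64 * (a - 3 / 2) + 8"
      unfolding q_def by (simp add: algebra_simps power2_eq_square)
    moreover have "q \<ge> 0" unfolding q_def by simp
    ultimately have "32 * (a * a) - (2 * a + 5) * (2 * a + 5) \<ge> 0" using \<open>a > 3 / 2\<close> by simp
    then have "(2 * a + 5) * (2 * a + 5) \<le> 32 * (a * a)" by simp
    then show ?thesis using LL by linarith
  qed
  then show ?thesis
  proof
    assume "(2 * a + 5) * (2 * a + 5) \<le> real L * real L"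
    then have "(2 * a + 5)\<^sup>2 \<le> (real L)\<^sup>2" by (simp only: power2_eq_square)
    then have "2 * a + 5 \<le> real L" by (rule power2_le_imp_le) simp
    then have "2 * real l + 4 < real L" using la by linarith
    then show ?thesis by linarith
  next
    assume l_L: "l = 1 \<and> 32 \<le> real L * real L"
    have "5 < real L"
    proof (rule ccontr)
      assume "\<not> 5 < real L"
      then have "real L * real L \<le> 5 * 5" by (intro mult_mono) auto
      then show False using l_L by linarith
    qed
    then show ?thesis using l_L by linarith
  qed
qed

lemma conf_in_Lam: "\<sigma> \<in> conf L \<Longrightarrow> x \<in> Lam L \<Longrightarrow> \<sigma> x = 1 \<or> \<sigma> x = -1"
  unfolding conf_def by blast

lemma conf_notin_Lam: "\<sigma> \<in> conf L \<Longrightarrow> x \<notin> Lam L \<Longrightarrow> \<sigma> x = 0"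
  unfolding conf_def by blast

lemma conf_ne_constant:
  assumes "\<sigma> \<in> conf L" "\<sigma> \<noteq> (\<lambda>x. if x \<in> Lam L then c else 0)" "c \<in> {-1, 1}"
  obtains z where "z \<in> Lam L" "\<sigma> z = - c"
proof -
  obtain z where z: "\<sigma> z \<noteq> (if z \<in> Lam L then c else 0)" using assms(2) by (metis ext)
  then have zL: "z \<in> Lam L" using conf_notin_Lam[OF assms(1), of z] by (cases "z \<in> Lam L") simp_all
  moreover have "\<sigma> z = - c" using z zL conf_in_Lam[OF assms(1) zL] assms(3) by auto
  ultimately show ?thesis by (rule that)
qed

lemma periodic_field_of_conf:
  assumes "L \<ge> 2" "0 < h" "2 * h \<le> J" "\<sigma> \<in> conf L"
  shows "periodic_field L J h (\<sigma> \<circ> proj L)"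
proof
  show "pm_field (\<sigma> \<circ> proj L)"
    using conf_in_Lam[OF assms(4) proj_in_Lam] assms(1) unfolding pm_field_def comp_def by simp
qed (use assms in auto)

lemma conf_both_signs:
  assumes "\<sigma> \<in> conf L" "\<sigma> \<noteq> allminus L" "\<sigma> \<noteq> allplus L"
  obtains zp zm where "(\<sigma> \<circ> proj L) zp = 1" "(\<sigma> \<circ> proj L) zm = -1"
proof -
  obtain zp where "zp \<in> Lam L" "\<sigma> zp = 1"
    using conf_ne_constant[OF assms(1), of "-1"] assms(2) unfolding allminus_def by auto
  moreover obtain zm where "zm \<in> Lam L" "\<sigma> zm = -1"
    using conf_ne_constant[OF assms(1), of 1] assms(3) unfolding allplus_def by auto
  ultimately show ?thesis using that[of "lift zp" "lift zm"] by (simp add: proj_lift)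
qed

context periodic_field
begin

lemma escapes_exist:
  assumes l: "l \<ge> 1" "(2 * real l - 1) * h < J" "J < (2 * real l + 1) * h" "2 * int l + 4 \<le> int L"
    and "s zp = 1" "s zm = -1"
  obtains xs where "escapes L J h 0 s xs"
proof (cases "locally_stable s")
  case True
  interpret stable_field L J h s l
    using l True by unfold_locales auto
  obtain x y where xy: "y \<in> set (nbrs x)" "s x = 1" "s y = -1"
    using exists_boundary_edge[OF assms(5,6)] by blast
  obtain g where "torus_aut L g" "g (0, 0, True) = x" "g (0, -1, False) = y"
    using oriented_edge_frame[OF L1 xy(1)] by blast
  then have escapable using escapable_of_boundary xy unfolding on_boundary_def by blast
  then show ?thesis using that unfolding escapable_def by blast
qed (use escapes_of_unstable in blast)

end

theorem lemma4p5:
  fixes L :: nat and J h :: real and \<sigma> :: "site \<Rightarrow> int"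
  assumes "L \<ge> 1"
    and "0 < h" and "h < 1" and "J \<ge> 2 * h"
    and "J / (2 * h) - 1 / 2 \<notin> \<int>"
    and "real (card (Lam L)) \<ge> (4 * J / h) ^ 2"
    and "\<sigma> \<in> XV L J h (J - h) - {allminus L, allplus L}"
  shows "stab L J h \<sigma> \<le> ereal (2 * J)"
proof -
  obtain l :: nat where l: "l \<ge> 1" "(2 * real l - 1) * h < J" "J < (2 * real l + 1) * h"
    using critical_length_exists[OF assms(2,4,5)] by blast
  have l_box: "2 * int l + 4 \<le> int L"
    using critical_length_fits[OF assms(2,4) l(2,1)] assms(6) unfolding card_Lam by simp
  then have L2: "L \<ge> 2" by linarith
  have \<sigma>: "\<sigma> \<in> conf L" "\<sigma> \<noteq> allminus L" "\<sigma> \<noteq> allplus L" using assms(7) unfolding XV_def by auto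
  interpret periodic_field L J h "\<sigma> \<circ> proj L"
    using periodic_field_of_conf[OF L2 assms(2,4) \<sigma>(1)] .
  obtain zp zm where "(\<sigma> \<circ> proj L) zp = 1" "(\<sigma> \<circ> proj L) zm = -1"
    using conf_both_signs[OF \<sigma>] .
  then obtain xs where "escapes L J h 0 (\<sigma> \<circ> proj L) xs"
    using escapes_exist[OF l l_box] by blast
  then show ?thesis using stab_le_of_escapes[OF L2 \<sigma>(1)] J_pos by simp
qed

end
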